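(* Let $\mathcal K_\bullet,\mathcal K_\circ\in\mathbb K$ with $\mathcal K_\circ\in\mathrm{refine}(\mathcal K_\bullet)$. Then every $v\in L^2(\Gamma)$ satisfies $$(J_\circ-J_\bullet)v\in\mathrm{span}\big\{\bar R_{\circ,i,p}:\ i\in\{1-p+o,\dots,N_\circ-p-1\},\ \mathrm{supp}(\bar R_{\circ,i,p})\cap\widetilde{\mathcal N}_{\circ\setminus\bullet}\ne\emptyset\big\},$$ where $\widetilde{\mathcal N}_{\circ\setminus\bullet}:=(\mathcal N_\circ\setminus\mathcal N_\bullet)\cup\{z\in\mathcal N_\circ\cap\mathcal N_\bullet:\#_\circ z>\#_\bullet z\}$.
   Context: Geometry: $\Omega\subset\mathbb R^2$ is a bounded simply connected Lipschitz domain with piecewise smooth boundary, $\Gamma\subseteq\partial\Omega$ is connected with Lipschitz relative boundary. Either $\Gamma=\partial\Omega$ (closed case), parametrized by a continuous, piecewise continuously differentiable $\gamma:[a,b]\to\Gamma$ with $\gamma(a)=\gamma(b)$ and $\gamma|_{[a,b)}$ bijective, or $\Gamma\subsetneq\partial\Omega$ (open case), parametrized by a bijective continuous piecewise $C^1$ map $\gamma:[a,b]\to\Gamma$; the one-sided derivatives satisfy $\gamma^{\prime_\ell}(t)\neq0$ for $t\in(a,b]$, $\gamma^{\prime_r}(t)\ne0$ for $t\in[a,b)$, and $\gamma^{\prime_\ell}(t)+c\gamma^{\prime_r}(t)\ne0$ for all $c>0$ (for $t\in[a,b]$ in the closed, $t\in(a,b)$ in the open case). Write $\gamma^{-1}:=(\gamma|_{[a,b)})^{-1}$.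 Set $o=0$ in the closed and $o=1$ in the open case. Fix $p\in\mathbb N$. Knot vectors: a knot vector $\mathcal K_\bullet$ consists of parameter nodes $a=\hat z_0<\dots<\hat z_n=b$ such that $\gamma$ is $C^1$ on each $[\hat z_{j-1},\hat z_j]$, with multiplicities $\#_\bullet\in\{1,\dots,p\}$ at interior nodes and $p+1$ at $\hat z_0,\hat z_n$; the nodes are $\mathcal N_\bullet=\{\gamma(\hat z_j)\}$, multiplicities transfer to them, and $N_\bullet=\sum_{j=1}^n\#_\bullet\hat z_j$. The mesh $\mathcal T_\bullet$ consists of elements $T_j=\gamma([\hat z_{j-1},\hat z_j])$; $\hat\kappa_\bullet=\max\{|\gamma^{-1}(T)|/|\gamma^{-1}(T')|:T,T'\in\mathcal T_\bullet,T\cap T'\ne\emptyset\}$. The parameter knots $(t_{\bullet,i})$ list $\hat z_1,\dots,\hat z_n$ (closed case, $i=1,\dots,N_\bullet$) resp. $\hat z_0,\dots,\hat z_n$ (open case, $i=-p,\dots,N_\bullet$) increasingly, each repeated according to its multiplicity; they are extended to $(t_{\bullet,i})_{i\in\mathbb Z}$, nondecreasing, with $t_{\bullet,-p}=\dots=t_{\bullet,0}=a$, $t_{\bullet,i}\to\pm\infty$, the extension outside $(a,b]$ being the same for all knot vectors. A fixed initial knot vector $\mathcal K_0$ and $\hat\kappa_{\max}\ge1$ are given; $\mathbb K$ is the set of knot vectors with $\hat\kappa_\bullet\le\hat\kappa_{\max}$ obtained from $\mathcal K_0$ by dyadic bisections of elements in the parameter domain and multiplicity increases. $\mathcal K_\circ\in\mathrm{refine}(\mathcal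 K_\bullet)$ means $\mathcal N_\bullet\subseteq\mathcal N_\circ$, $\#_\bullet z\le\#_\circ z$ for $z\in\mathcal N_\bullet$, and every $T\in\mathcal T_\circ$ lies in some $T'\in\mathcal T_\bullet$ with $|\gamma^{-1}(T')|=2^j|\gamma^{-1}(T)|$, $j\in\mathbb N_0$. B-splines: $\hat B_{\bullet,i,0}=\chi_{[t_{\bullet,i-1},t_{\bullet,i})}$, $\hat B_{\bullet,i,q}=\beta_{\bullet,i-1,q}\hat B_{\bullet,i,q-1}+(1-\beta_{\bullet,i,q})\hat B_{\bullet,i+1,q-1}$, $\beta_{\bullet,i,q}(t)=(t-t_{\bullet,i})/(t_{\bullet,i+q}-t_{\bullet,i})$ if $t_{\bullet,i}\neq t_{\bullet,i+q}$, else $0$. Weights/NURBS: given initial weights $w_{0,i}>0$, $i=1-p,\dots,N_0-p$, with $w_{0,1-p}=w_{0,N_0-p}$, let $\hat w=\sum_{k=1-p}^{N_0-p}w_{0,k}\hat B_{0,k,p}|_{[a,b]}$; for $\mathcal K_\bullet\in\mathbb K$ the weights $w_{\bullet,i}$, $i=1-p,\dots,N_\bullet-p$, are the unique coefficients with $\hat w=\sum_k w_{\bullet,k}\hat B_{\bullet,k,p}$ on $[a,b]$. Set $\hat R_{\bullet,i,p}=w_{\bullet,i}\hat B_{\bullet,i,p}/\hat w$, $R_{\bullet,i,p}=\hat R_{\bullet,i,p}\circ\gamma^{-1}$, $\bar R_{\bullet,1-p,p}=R_{\bullet,1-p,p}+R_{\bullet,N_\bullet-p,p}$ and $\bar R_{\bullet,i,p}=R_{\bullet,i,p}$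 for $i\neq1-p$. $\mathcal X_\bullet=\mathrm{span}\{\bar R_{\bullet,i,p}:i=1-p+o,\dots,N_\bullet-p-1\}$. Scott–Zhang operator: for each $\mathcal K_\bullet$ and $i\in\{1-p,\dots,N_\bullet-p\}$ let $\hat B^*_{\bullet,i,p}=\hat B^*(\cdot\,|\,t_{\bullet,i-1},\dots,t_{\bullet,i+p})\in L^2(a,b)$ be dual functions determined by a fixed rule from the knots $t_{\bullet,i-1},\dots,t_{\bullet,i+p}$ only, with support $[t_{\bullet,i-1},t_{\bullet,i+p}]$ and $\int_a^b\hat B^*_{\bullet,i,p}\hat B_{\bullet,j,p}\,dt=\delta_{ij}$. Let $\hat R^*_{\bullet,i,p}=\hat B^*_{\bullet,i,p}\hat w/w_{\bullet,i}$ and $J_\bullet v=\sum_{i=1-p+o}^{N_\bullet-p-1}\alpha_{\bullet,i}(v)\bar R_{\bullet,i,p}$ with $\alpha_{\bullet,1-p}(v)=\int_a^b\frac12(\hat R^*_{\bullet,1-p,p}+\hat R^*_{\bullet,N_\bullet-p,p})\,v\circ\gamma\,dt$ and $\alpha_{\bullet,i}(v)=\int_a^b\hat R^*_{\bullet,i,p}\,v\circ\gamma\,dt$ for $i\neq1-p$. *)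

theory Defs
  imports "HOL-Analysis.Analysis"
begin

type_synonym pt = "real^2"

definition lipschitz_domain :: "pt set \<Rightarrow> bool" where
  "lipschitz_domain \<Omega> \<longleftrightarrow> open \<Omega> \<and>
     (\<forall>x\<in>frontier \<Omega>. \<exists>r>0. \<exists>(Q::pt \<Rightarrow> pt) (L::real) g. orthogonal_transformation Q \<and> L-lipschitz_on UNIV (g :: real \<Rightarrow> real) \<and>
        \<Omega> \<inter> ball x r = {y \<in> ball x r. g ((Q (y - x)) $ 1) < (Q (y - x)) $ 2})"

definition pw_smooth_boundary :: "pt set \<Rightarrow> bool" where
  "pw_smooth_boundary \<Omega> \<longleftrightarrow>
     (\<exists>g. valid_path g \<and> pathfinish g = pathstart g \<and> path_image g = frontier \<Omega>)"

definition C1_on :: "(real \<Rightarrow> pt) \<Rightarrow> real \<Rightarrow> real \<Rightarrow> bool" where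
  "C1_on g c d \<longleftrightarrow> (\<exists>D. continuous_on {c..d} D \<and>
       (\<forall>t\<in>{c..d}. (g has_vector_derivative D t) (at t within {c..d})))"

definition pw_C1 :: "(real \<Rightarrow> pt) \<Rightarrow> real \<Rightarrow> real \<Rightarrow> bool" where
  "pw_C1 g a b \<longleftrightarrow> continuous_on {a..b} g \<and>
     (\<exists>S. finite S \<and> (\<forall>c d. a \<le> c \<and> c < d \<and> d \<le> b \<and> {c<..<d} \<inter> S = {} \<longrightarrow> C1_on g c d))"

definition left_deriv :: "(real \<Rightarrow> pt) \<Rightarrow> real \<Rightarrow> real \<Rightarrow> pt \<Rightarrow> bool" where
  "left_deriv g a t D \<longleftrightarrow> (g has_vector_derivative D) (at t within {a..t})"

definition right_deriv :: "(real \<Rightarrow> pt) \<Rightarrow> real \<Rightarrow> real \<Rightarrow> pt \<Rightarrow> bool" where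
  "right_deriv g b t D \<longleftrightarrow> (g has_vector_derivative D) (at t within {t..b})"

text \<open>The standing geometric setting; cl = True is the case Gamma = boundary of Omega.\<close>
definition geom_setting :: "pt set \<Rightarrow> pt set \<Rightarrow> bool \<Rightarrow> (real \<Rightarrow> pt) \<Rightarrow> real \<Rightarrow> real \<Rightarrow> bool" where
  "geom_setting \<Omega> \<Gamma> cl g a b \<longleftrightarrow>
     open \<Omega> \<and> bounded \<Omega> \<and> connected \<Omega> \<and> simply_connected \<Omega> \<and> lipschitz_domain \<Omega> \<and>
     pw_smooth_boundary \<Omega> \<and>
     a < b \<and> pw_C1 g a b \<and> \<Gamma> = g ` {a..b} \<and> connected \<Gamma> \<and>
     (\<forall>t\<in>{a<..b}. \<exists>D. left_deriv g a t D \<and> D \<noteq> 0) \<and>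
     (\<forall>t\<in>{a..<b}. \<exists>D. right_deriv g b t D \<and> D \<noteq> 0) \<and>
     (\<forall>t\<in>{a<..<b}. \<forall>Dl Dr. left_deriv g a t Dl \<and> right_deriv g b t Dr \<longrightarrow>
          (\<forall>c>0. Dl + c *\<^sub>R Dr \<noteq> 0)) \<and>
     (if cl then
        g a = g b \<and> inj_on g {a..<b} \<and> \<Gamma> = frontier \<Omega> \<and>
        (\<forall>Dl Dr. left_deriv g a b Dl \<and> right_deriv g b a Dr \<longrightarrow> (\<forall>c>0. Dl + c *\<^sub>R Dr \<noteq> 0))
      else inj_on g {a..b} \<and> \<Gamma> \<subset> frontier \<Omega>)"

definition ginv :: "bool \<Rightarrow> (real \<Rightarrow> pt) \<Rightarrow> real \<Rightarrow> real \<Rightarrow> pt \<Rightarrow> real" where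
  "ginv cl g a b = inv_into (if cl then {a..<b} else {a..b}) g"

definition ocase :: "bool \<Rightarrow> int" where
  "ocase cl = (if cl then 0 else 1)"

text \<open>L2(Gamma) with respect to arc length, expressed through the parametrization.\<close>
definition L2_Gamma :: "(real \<Rightarrow> pt) \<Rightarrow> real \<Rightarrow> real \<Rightarrow> (pt \<Rightarrow> real) \<Rightarrow> bool" where
  "L2_Gamma g a b v \<longleftrightarrow> (\<lambda>t. v (g t)) \<in> borel_measurable (lebesgue_on {a..b}) \<and>
     integrable (lebesgue_on {a..b}) (\<lambda>t. (v (g t))\<^sup>2 * norm (vector_derivative g (at t)))"

text \<open>A knot vector is encoded by its multiplicity function on the parameter domain
  (value 0 = not a node).\<close>
type_synonym knotvec = "real \<Rightarrow> nat"

definition nodes_par :: "knotvec \<Rightarrow> real set" where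
  "nodes_par K = {z. 0 < K z}"

definition is_knotvec :: "(real \<Rightarrow> pt) \<Rightarrow> real \<Rightarrow> real \<Rightarrow> nat \<Rightarrow> knotvec \<Rightarrow> bool" where
  "is_knotvec g a b p K \<longleftrightarrow> finite (nodes_par K) \<and> nodes_par K \<subseteq> {a..b} \<and>
     K a = p + 1 \<and> K b = p + 1 \<and> (\<forall>z\<in>{a<..<b}. K z \<le> p) \<and>
     (\<forall>c d. c \<in> nodes_par K \<and> d \<in> nodes_par K \<and> c < d \<and> {c<..<d} \<inter> nodes_par K = {}
         \<longrightarrow> C1_on g c d)"

definition zs :: "knotvec \<Rightarrow> real list" where
  "zs K = sorted_list_of_set (nodes_par K)"

text \<open>Elements in the parameter domain: pairs (z_{j-1}, z_j); T_j = g ` {z_{j-1}..z_j}.\<close>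
definition elems :: "knotvec \<Rightarrow> (real \<times> real) set" where
  "elems K = {(zs K ! (j - 1), zs K ! j) | j. 1 \<le> j \<and> j < length (zs K)}"

text \<open>Local mesh ratio; |gamma^{-1}(T)| for T = g ` {c..d} equals d - c.\<close>
definition kappa :: "(real \<Rightarrow> pt) \<Rightarrow> knotvec \<Rightarrow> real" where
  "kappa g K = Max {(d - c) / (d' - c') | c d c' d'.
      (c, d) \<in> elems K \<and> (c', d') \<in> elems K \<and> g ` {c..d} \<inter> g ` {c'..d'} \<noteq> {}}"

inductive_set reach :: "real \<Rightarrow> real \<Rightarrow> nat \<Rightarrow> knotvec \<Rightarrow> knotvec set"
  for a b :: real and p :: nat and K0 :: knotvec where
  init: "K0 \<in> reach a b p K0"
| bisect: "K \<in> reach a b p K0 \<Longrightarrow> (c, d) \<in> elems K \<Longrightarrow> K((c + d) / 2 := 1) \<in> reach a b p K0"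
| incr: "K \<in> reach a b p K0 \<Longrightarrow> z \<in> {a<..<b} \<Longrightarrow> 0 < K z \<Longrightarrow> K z < p \<Longrightarrow>
         K(z := Suc (K z)) \<in> reach a b p K0"

definition Kset :: "(real \<Rightarrow> pt) \<Rightarrow> real \<Rightarrow> real \<Rightarrow> nat \<Rightarrow> knotvec \<Rightarrow> real \<Rightarrow> knotvec set" where
  "Kset g a b p K0 kmax = {K \<in> reach a b p K0. is_knotvec g a b p K \<and> kappa g K \<le> kmax}"

definition refines :: "(real \<Rightarrow> pt) \<Rightarrow> knotvec \<Rightarrow> knotvec \<Rightarrow> bool" where
  "refines g Kc Kb \<longleftrightarrow> g ` nodes_par Kb \<subseteq> g ` nodes_par Kc \<and>
     (\<forall>z\<in>nodes_par Kb. Kb z \<le> Kc z) \<and>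
     (\<forall>(c, d)\<in>elems Kc. \<exists>(c', d')\<in>elems Kb. g ` {c..d} \<subseteq> g ` {c'..d'} \<and>
         (\<exists>j::nat. d' - c' = 2 ^ j * (d - c)))"

definition Nk :: "real \<Rightarrow> knotvec \<Rightarrow> nat" where
  "Nk a K = (\<Sum>z\<in>nodes_par K - {a}. K z)"

definition knots_list :: "knotvec \<Rightarrow> real list" where
  "knots_list K = concat (map (\<lambda>z. replicate (K z) z) (zs K))"

text \<open>Parameter knots t_i, i \<in> Z: t_{-p}..t_N from the knot vector; fixed extension
  lo (below index -p) and hi (above index N), the same for all knot vectors.\<close>
definition tk :: "real \<Rightarrow> nat \<Rightarrow> (nat \<Rightarrow> real) \<Rightarrow> (nat \<Rightarrow> real) \<Rightarrow> knotvec \<Rightarrow> int \<Rightarrow> real" where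
  "tk a p lo hi K i =
     (if i < - int p then lo (nat (- int p - 1 - i))
      else if i \<le> int (Nk a K) then knots_list K ! nat (i + int p)
      else hi (nat (i - int (Nk a K) - 1)))"

definition beta :: "(int \<Rightarrow> real) \<Rightarrow> int \<Rightarrow> nat \<Rightarrow> real \<Rightarrow> real" where
  "beta t i q x = (if t i \<noteq> t (i + int q) then (x - t i) / (t (i + int q) - t i) else 0)"

fun bspl :: "(int \<Rightarrow> real) \<Rightarrow> int \<Rightarrow> nat \<Rightarrow> real \<Rightarrow> real" where
  "bspl t i 0 x = (if t (i - 1) \<le> x \<and> x < t i then 1 else 0)"
| "bspl t i (Suc q) x = beta t (i - 1) (Suc q) x * bspl t i q x
                        + (1 - beta t i (Suc q) x) * bspl t (i + 1) q x"

definition idx :: "real \<Rightarrow> nat \<Rightarrow> knotvec \<Rightarrow> int set" where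
  "idx a p K = {1 - int p .. int (Nk a K) - int p}"

definition what :: "real \<Rightarrow> real \<Rightarrow> nat \<Rightarrow> (nat \<Rightarrow> real) \<Rightarrow> (nat \<Rightarrow> real) \<Rightarrow> knotvec \<Rightarrow> (int \<Rightarrow> real)
     \<Rightarrow> real \<Rightarrow> real" where
  "what a b p lo hi K0 w0 x =
     (if x \<in> {a..b} then (\<Sum>k\<in>idx a p K0. w0 k * bspl (tk a p lo hi K0) k p x) else 0)"

definition weights :: "real \<Rightarrow> real \<Rightarrow> nat \<Rightarrow> (nat \<Rightarrow> real) \<Rightarrow> (nat \<Rightarrow> real) \<Rightarrow> knotvec \<Rightarrow> (int \<Rightarrow> real)
     \<Rightarrow> knotvec \<Rightarrow> int \<Rightarrow> real" where
  "weights a b p lo hi K0 w0 K = (THE w.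
     (\<forall>x\<in>{a..b}. what a b p lo hi K0 w0 x = (\<Sum>k\<in>idx a p K. w k * bspl (tk a p lo hi K) k p x)) \<and>
     (\<forall>k. k \<notin> idx a p K \<longrightarrow> w k = 0))"

definition Rhat :: "real \<Rightarrow> real \<Rightarrow> nat \<Rightarrow> (nat \<Rightarrow> real) \<Rightarrow> (nat \<Rightarrow> real) \<Rightarrow> knotvec \<Rightarrow> (int \<Rightarrow> real)
     \<Rightarrow> knotvec \<Rightarrow> int \<Rightarrow> real \<Rightarrow> real" where
  "Rhat a b p lo hi K0 w0 K i x =
     weights a b p lo hi K0 w0 K i * bspl (tk a p lo hi K) i p x / what a b p lo hi K0 w0 x"

definition Rfun :: "bool \<Rightarrow> (real \<Rightarrow> pt) \<Rightarrow> real \<Rightarrow> real \<Rightarrow> nat \<Rightarrow> (nat \<Rightarrow> real) \<Rightarrow> (nat \<Rightarrow> real)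
     \<Rightarrow> knotvec \<Rightarrow> (int \<Rightarrow> real) \<Rightarrow> knotvec \<Rightarrow> int \<Rightarrow> pt \<Rightarrow> real" where
  "Rfun cl g a b p lo hi K0 w0 K i y =
     (if y \<in> g ` {a..b} then Rhat a b p lo hi K0 w0 K i (ginv cl g a b y) else 0)"

definition Rbar :: "bool \<Rightarrow> (real \<Rightarrow> pt) \<Rightarrow> real \<Rightarrow> real \<Rightarrow> nat \<Rightarrow> (nat \<Rightarrow> real) \<Rightarrow> (nat \<Rightarrow> real)
     \<Rightarrow> knotvec \<Rightarrow> (int \<Rightarrow> real) \<Rightarrow> knotvec \<Rightarrow> int \<Rightarrow> pt \<Rightarrow> real" where
  "Rbar cl g a b p lo hi K0 w0 K i y =
     (if i = 1 - int p
      then Rfun cl g a b p lo hi K0 w0 K (1 - int p) y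
           + Rfun cl g a b p lo hi K0 w0 K (int (Nk a K) - int p) y
      else Rfun cl g a b p lo hi K0 w0 K i y)"

definition Iset :: "bool \<Rightarrow> real \<Rightarrow> nat \<Rightarrow> knotvec \<Rightarrow> int set" where
  "Iset cl a p K = {1 - int p + ocase cl .. int (Nk a K) - int p - 1}"

text \<open>The knots t_{i-1}, ..., t_{i+p} on which the dual function with index i depends.\<close>
definition window :: "real \<Rightarrow> nat \<Rightarrow> (nat \<Rightarrow> real) \<Rightarrow> (nat \<Rightarrow> real) \<Rightarrow> knotvec \<Rightarrow> int \<Rightarrow> real list" where
  "window a p lo hi K i = map (tk a p lo hi K) [i - 1 .. i + int p]"

definition Rstar :: "real \<Rightarrow> real \<Rightarrow> nat \<Rightarrow> (nat \<Rightarrow> real) \<Rightarrow> (nat \<Rightarrow> real) \<Rightarrow> knotvec \<Rightarrow> (int \<Rightarrow> real)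
     \<Rightarrow> (real list \<Rightarrow> real \<Rightarrow> real) \<Rightarrow> knotvec \<Rightarrow> int \<Rightarrow> real \<Rightarrow> real" where
  "Rstar a b p lo hi K0 w0 Bstar K i x =
     Bstar (window a p lo hi K i) x * what a b p lo hi K0 w0 x / weights a b p lo hi K0 w0 K i"

definition alpha :: "(real \<Rightarrow> pt) \<Rightarrow> real \<Rightarrow> real \<Rightarrow> nat \<Rightarrow> (nat \<Rightarrow> real) \<Rightarrow> (nat \<Rightarrow> real) \<Rightarrow> knotvec
     \<Rightarrow> (int \<Rightarrow> real) \<Rightarrow> (real list \<Rightarrow> real \<Rightarrow> real) \<Rightarrow> knotvec \<Rightarrow> (pt \<Rightarrow> real) \<Rightarrow> int \<Rightarrow> real" where
  "alpha g a b p lo hi K0 w0 Bstar K v i =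
     (if i = 1 - int p
      then (LINT t|lebesgue_on {a..b}. (1 / 2) * (Rstar a b p lo hi K0 w0 Bstar K (1 - int p) t
                 + Rstar a b p lo hi K0 w0 Bstar K (int (Nk a K) - int p) t) * v (g t))
      else (LINT t|lebesgue_on {a..b}. Rstar a b p lo hi K0 w0 Bstar K i t * v (g t)))"

definition Jop :: "bool \<Rightarrow> (real \<Rightarrow> pt) \<Rightarrow> real \<Rightarrow> real \<Rightarrow> nat \<Rightarrow> (nat \<Rightarrow> real) \<Rightarrow> (nat \<Rightarrow> real) \<Rightarrow> knotvec
     \<Rightarrow> (int \<Rightarrow> real) \<Rightarrow> (real list \<Rightarrow> real \<Rightarrow> real) \<Rightarrow> knotvec \<Rightarrow> (pt \<Rightarrow> real) \<Rightarrow> pt \<Rightarrow> real" where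
  "Jop cl g a b p lo hi K0 w0 Bstar K v y =
     (\<Sum>i\<in>Iset cl a p K. alpha g a b p lo hi K0 w0 Bstar K v i * Rbar cl g a b p lo hi K0 w0 K i y)"

definition Npts :: "(real \<Rightarrow> pt) \<Rightarrow> knotvec \<Rightarrow> pt set" where
  "Npts g K = g ` nodes_par K"

definition Ntilde :: "bool \<Rightarrow> (real \<Rightarrow> pt) \<Rightarrow> real \<Rightarrow> real \<Rightarrow> knotvec \<Rightarrow> knotvec \<Rightarrow> pt set" where
  "Ntilde cl g a b Kc Kb = (Npts g Kc - Npts g Kb) \<union>
     {z \<in> Npts g Kc \<inter> Npts g Kb. Kc (ginv cl g a b z) > Kb (ginv cl g a b z)}"

end

theory Submission
  imports Defs
begin

text \<open>Both operators are expanded in the (unperiodized) NURBS basis of the finer knot vector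
  \<open>Kc\<close>. Since all knot vectors share the weight function
  \<open>wh\<close>, \<open>J Kb v\<close> is a spline over \<open>Kb\<close> divided by \<open>wh\<close>, and Boehm's knot insertion re-expands
  that spline over \<open>Kc\<close>. A fine basis function whose support avoids the new and the raised nodes
  has the same local knots \<open>t (i - 1), \<dots>, t (i + p)\<close> as some coarse basis function \<open>k'\<close>.
  The dual functional, the weight and hence \<open>\<alpha>\<close> depend only on these knots, so the fine
  coefficient of \<open>J Kc v\<close> is \<open>\<alpha> Kb k'\<close>; applying the same dual functional to the
  re-expanded spline shows that the fine coefficient of \<open>J Kb v\<close> is \<open>\<alpha> Kb k'\<close> as well, so
  the two cancel in the difference.\<close>

section \<open>B-splines over an arbitrary nondecreasing knot sequence\<close>

lemma bspl_cong_knots: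
  "(\<And>j. i - 1 \<le> j \<Longrightarrow> j \<le> i + int q \<Longrightarrow> t j = s j) \<Longrightarrow> bspl t i q x = bspl s i q x"
proof (induction q arbitrary: i)
  case 0 then show ?case by simp
next
  case (Suc q)
  have "bspl t i q x = bspl s i q x" "bspl t (i + 1) q x = bspl s (i + 1) q x"
    by (rule Suc.IH, use Suc.prems in auto)+
  moreover have "t (i - 1) = s (i - 1)" "t (i - 1 + int (Suc q)) = s (i - 1 + int (Suc q))"
    "t i = s i" "t (i + int (Suc q)) = s (i + int (Suc q))"
    using Suc.prems by auto
  ultimately show ?case by (simp add: beta_def)
qed

lemma bspl_shift_index: "bspl (\<lambda>j. t (j - 1)) (i + 1) q x = bspl t i q x"
proof (induction q arbitrary: i)
  case 0 then show ?case by simp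
next
  case (Suc q)
  have "bspl (\<lambda>j. t (j - 1)) (i + 1 + 1) q x = bspl t (i + 1) q x"
    using Suc.IH[of "i + 1"] by simp
  then show ?case using Suc.IH[of i] by (simp add: beta_def algebra_simps)
qed

lemma bspl_support:
  assumes "mono t" "bspl t i q x \<noteq> 0"
  shows "t (i - 1) \<le> x \<and> x < t (i + int q)"
  using assms(2)
proof (induction q arbitrary: i)
  case 0 then show ?case by (simp split: if_splits)
next
  case (Suc q)
  from Suc.prems have "bspl t i q x \<noteq> 0 \<or> bspl t (i + 1) q x \<noteq> 0" by auto
  moreover have "t (i + int q) \<le> t (i + int (Suc q))" "t (i - 1) \<le> t i"
    using assms(1) by (auto intro: monoD)
  ultimately show ?case using Suc.IH[of i] Suc.IH[of "i + 1"] by (auto simp: algebra_simps)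
qed

text \<open>On the support of the B-splines they are combined with, the recursion weights lie in
  \<open>[0, 1]\<close>; this yields nonnegativity and the crude bound \<open>2 ^ q\<close>.\<close>

lemma beta_bounds_left:
  assumes "mono t" "bspl t i q x \<noteq> 0"
  shows "0 \<le> beta t (i - 1) (Suc q) x \<and> beta t (i - 1) (Suc q) x \<le> 1"
proof -
  have "i - 1 + int (Suc q) = i + int q" by simp
  with bspl_support[OF assms] show ?thesis unfolding beta_def by (auto simp: field_simps)
qed

lemma beta_bounds_right:
  assumes "mono t" "bspl t (i + 1) q x \<noteq> 0"
  shows "0 \<le> 1 - beta t i (Suc q) x \<and> 1 - beta t i (Suc q) x \<le> 1"
  using bspl_support[OF assms] unfolding beta_def by (auto simp: field_simps algebra_simps)

lemma bspl_bounds: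
  assumes "mono t"
  shows "0 \<le> bspl t i q x \<and> bspl t i q x \<le> 2 ^ q"
proof (induction q arbitrary: i)
  case 0 then show ?case by simp
next
  case (Suc q)
  define A where "A = beta t (i - 1) (Suc q) x * bspl t i q x"
  define B where "B = (1 - beta t i (Suc q) x) * bspl t (i + 1) q x"
  have "0 \<le> A \<and> A \<le> 2 ^ q"
  proof (cases "bspl t i q x = 0")
    case False
    then show ?thesis unfolding A_def
      using beta_bounds_left[OF assms False] Suc.IH[of i]
      by (auto intro: order_trans[OF mult_left_le_one_le])
  qed (simp add: A_def)
  moreover have "0 \<le> B \<and> B \<le> 2 ^ q"
  proof (cases "bspl t (i + 1) q x = 0")
    case False
    then show ?thesis unfolding B_def
      using beta_bounds_right[OF assms False] Suc.IH[of "i + 1"]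
      by (auto intro: order_trans[OF mult_left_le_one_le])
  qed (simp add: B_def)
  moreover have "bspl t i (Suc q) x = A + B" by (simp add: A_def B_def)
  ultimately show ?case by simp
qed

lemma bspl_pos:
  assumes "mono t" "t (i - 1) < x" "x < t (i + int q)"
    "\<And>j. i - 1 \<le> j \<Longrightarrow> j \<le> i + int q \<Longrightarrow> x \<noteq> t j"
  shows "0 < bspl t i q x"
  using assms(2-)
proof (induction q arbitrary: i)
  case 0 then show ?case by simp
next
  case (Suc q)
  define A where "A = beta t (i - 1) (Suc q) x * bspl t i q x"
  define B where "B = (1 - beta t i (Suc q) x) * bspl t (i + 1) q x"
  have nonneg: "0 \<le> bspl t i q x" "0 \<le> bspl t (i + 1) q x"
    using bspl_bounds[OF assms(1)] by auto
  have "0 \<le> A"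
    using beta_bounds_left[OF assms(1)] nonneg unfolding A_def by (cases "bspl t i q x = 0") auto
  moreover have "0 \<le> B"
    using beta_bounds_right[OF assms(1)] nonneg unfolding B_def
    by (cases "bspl t (i + 1) q x = 0") auto
  moreover have "0 < A \<or> 0 < B"
  proof (cases "x < t (i + int q)")
    case True
    have "0 < bspl t i q x" using Suc.IH[of i] Suc.prems True by auto
    moreover have "0 < beta t (i - 1) (Suc q) x"
      using True Suc.prems(1) unfolding beta_def by (auto simp: field_simps)
    ultimately show ?thesis by (simp add: A_def)
  next
    case False
    then have "t (i + int q) < x" using Suc.prems(3)[of "i + int q"] by force
    moreover have "t i \<le> t (i + int q)" using assms(1) by (auto intro: monoD)
    ultimately have "t i < x" by simp
    then have "0 < bspl t (i + 1) q x" and "0 < 1 - beta t i (Suc q) x"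
      using Suc.IH[of "i + 1"] Suc.prems unfolding beta_def by (auto simp: algebra_simps field_simps)
    then show ?thesis by (simp add: B_def)
  qed
  moreover have "bspl t i (Suc q) x = A + B" by (simp add: A_def B_def)
  ultimately show ?case by linarith
qed

lemma borel_measurable_bspl: "bspl t i q \<in> borel_measurable borel"
proof (induction q arbitrary: i)
  case 0
  have "bspl t i 0 = indicator {t (i - 1)..<t i}" by (auto simp: indicator_def fun_eq_iff)
  then show ?case by simp
next
  case (Suc q)
  have "beta t j r \<in> borel_measurable borel" for j r
    unfolding beta_def by (cases "t j = t (j + int r)") auto
  then show ?case using Suc.IH[of i] Suc.IH[of "i + 1"]
    by (simp add: borel_measurable_add borel_measurable_times)
qed

section \<open>Boehm's knot insertion\<close>

definition insert_knot :: "(int \<Rightarrow> real) \<Rightarrow> int \<Rightarrow> real \<Rightarrow> int \<Rightarrow> real" where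
  "insert_knot t m \<xi> j = (if j < m then t j else if j = m then \<xi> else t (j - 1))"

definition boehm_coeff :: "(int \<Rightarrow> real) \<Rightarrow> real \<Rightarrow> int \<Rightarrow> nat \<Rightarrow> real" where
  "boehm_coeff t \<xi> i q = (if t (i + int q - 1) \<le> \<xi> then 1 else if \<xi> \<le> t (i - 1) then 0
      else (\<xi> - t (i - 1)) / (t (i + int q - 1) - t (i - 1)))"

lemma boehm_coeff_eq_1: "t (i + int q - 1) \<le> \<xi> \<Longrightarrow> boehm_coeff t \<xi> i q = 1"
  unfolding boehm_coeff_def by auto

lemma boehm_coeff_eq_0: "\<xi> \<le> t (i - 1) \<Longrightarrow> \<xi> < t (i + int q - 1) \<Longrightarrow> boehm_coeff t \<xi> i q = 0"
  unfolding boehm_coeff_def by auto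

lemma boehm_coeff_bounds: "0 \<le> boehm_coeff t \<xi> i q \<and> boehm_coeff t \<xi> i q \<le> 1"
  unfolding boehm_coeff_def by (auto simp: divide_simps)

lemma mono_insert_knot:
  assumes "mono t" "t (m - 1) \<le> \<xi>" "\<xi> < t m"
  shows "mono (insert_knot t m \<xi>)"
proof (rule monoI)
  fix x y :: int assume "x \<le> y"
  have tm: "\<And>u v. u \<le> v \<Longrightarrow> t u \<le> t v" using assms(1) by (auto intro: monoD)
  show "insert_knot t m \<xi> x \<le> insert_knot t m \<xi> y"
    unfolding insert_knot_def
    using \<open>x \<le> y\<close> tm[of x "m - 1"] tm[of m "y - 1"] tm[of x y] tm[of "x - 1" "y - 1"] assms
    by auto
qed

lemma bspl_insert_knot_outside:
  assumes "mono t" "t (m - 1) \<le> \<xi>" "\<xi> < t m" "m < i \<or> i + int q < m"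
  shows "bspl t i q x = boehm_coeff t \<xi> i q * bspl (insert_knot t m \<xi>) i q x
            + (1 - boehm_coeff t \<xi> (i + 1) q) * bspl (insert_knot t m \<xi>) (i + 1) q x"
proof -
  have tm: "\<And>u v. u \<le> v \<Longrightarrow> t u \<le> t v" using assms(1) by (auto intro: monoD)
  show ?thesis
  proof (cases "m < i")
    case True
    have "boehm_coeff t \<xi> i q = 0" "boehm_coeff t \<xi> (i + 1) q = 0"
      using tm[of m "i - 1"] tm[of m "i + int q - 1"] tm[of m i] tm[of m "i + 1 + int q - 1"]
        True assms
      by (auto intro: boehm_coeff_eq_0)
    moreover have "bspl (insert_knot t m \<xi>) (i + 1) q x = bspl (\<lambda>j. t (j - 1)) (i + 1) q x"
      by (rule bspl_cong_knots) (use True in \<open>auto simp: insert_knot_def\<close>)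
    ultimately show ?thesis by (simp add: bspl_shift_index)
  next
    case False
    with assms have "i + int q < m" by auto
    then have "boehm_coeff t \<xi> i q = 1" "boehm_coeff t \<xi> (i + 1) q = 1"
      and "bspl (insert_knot t m \<xi>) i q x = bspl t i q x"
      using tm[of "i + int q - 1" "m - 1"] tm[of "i + 1 + int q - 1" "m - 1"] assms
      by (auto intro!: boehm_coeff_eq_1 bspl_cong_knots simp: insert_knot_def)
    then show ?thesis by simp
  qed
qed

text \<open>The induction step of Boehm's formula expands both sides into the three B-splines
  \<open>bspl s j q\<close>, \<open>j = i, i + 1, i + 2\<close>, of the refined sequence \<open>s\<close>; the next three lemmas compare
  their coefficients, which need only agree where the respective B-spline does not vanish.\<close>

lemma boehm_step_first:
  assumes mt: "mono t" and m1: "t (m - 1) \<le> \<xi>" and m2: "\<xi> < t m"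
    and im: "i \<le> m" "m \<le> i + int q + 1"
    and s: "s = insert_knot t m \<xi>"
  shows "beta t (i - 1) (Suc q) x * boehm_coeff t \<xi> i q * bspl s i q x
       = boehm_coeff t \<xi> i (Suc q) * beta s (i - 1) (Suc q) x * bspl s i q x"
proof (cases "bspl s i q x = 0")
  case False
  have tm: "\<And>u v. u \<le> v \<Longrightarrow> t u \<le> t v" using mt by (auto intro: monoD)
  define A C E where "A = t (i - 1)" and "C = t (i + int q)" and "E = t (i + int q - 1)"
  have ix: "i - 1 + int (Suc q) = i + int q" "i + int (Suc q) - 1 = i + int q" by auto
  have sA: "s (i - 1) = A" unfolding s insert_knot_def A_def using im by simp
  have Ax: "A \<le> \<xi>" unfolding A_def using tm[of "i - 1" "m - 1"] im m1 by auto
  have EC: "A \<le> E" "E \<le> C" unfolding A_def C_def E_def by (auto intro: tm)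
  have supp: "A \<le> x" "x < s (i + int q)"
    using bspl_support[OF mono_insert_knot[OF mt m1 m2] False[unfolded s]] sA s by auto
  have eqs: "beta t (i - 1) (Suc q) x = (if A \<noteq> C then (x - A) / (C - A) else 0)"
    "beta s (i - 1) (Suc q) x = (if A \<noteq> s (i + int q) then (x - A) / (s (i + int q) - A) else 0)"
    "boehm_coeff t \<xi> i q = (if E \<le> \<xi> then 1 else if \<xi> \<le> A then 0 else (\<xi> - A) / (E - A))"
    "boehm_coeff t \<xi> i (Suc q) = (if C \<le> \<xi> then 1 else if \<xi> \<le> A then 0 else (\<xi> - A) / (C - A))"
    unfolding beta_def boehm_coeff_def ix sA A_def C_def E_def by (simp_all add: ac_simps)
  consider "m < i + int q" | "m = i + int q" | "m = i + int q + 1" using im by linarith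
  then have "beta t (i - 1) (Suc q) x * boehm_coeff t \<xi> i q
      = boehm_coeff t \<xi> i (Suc q) * beta s (i - 1) (Suc q) x"
  proof cases
    case 1
    then have "s (i + int q) = E" "\<xi> < E"
      unfolding s insert_knot_def E_def using tm[of m "i + int q - 1"] m2 by auto
    then show ?thesis unfolding eqs using Ax EC by (auto simp: divide_simps)
  next
    case 2
    then have "s (i + int q) = \<xi>" "E \<le> \<xi>" "\<xi> < C"
      unfolding s insert_knot_def E_def C_def using m1 m2 by auto
    then show ?thesis unfolding eqs using Ax EC supp by (auto simp: divide_simps)
  next
    case 3
    then have "s (i + int q) = C" "C \<le> \<xi>" unfolding s insert_knot_def C_def using m1 by auto
    then show ?thesis unfolding eqs using EC by (auto simp: divide_simps)
  qed
  then show ?thesis by simp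
qed simp

lemma boehm_step_middle:
  assumes mt: "mono t" and m1: "t (m - 1) \<le> \<xi>" and m2: "\<xi> < t m"
    and im: "i \<le> m" "m \<le> i + int q + 1"
    and s: "s = insert_knot t m \<xi>"
  shows "(beta t (i - 1) (Suc q) x * (1 - boehm_coeff t \<xi> (i + 1) q)
          + (1 - beta t i (Suc q) x) * boehm_coeff t \<xi> (i + 1) q) * bspl s (i + 1) q x
       = (boehm_coeff t \<xi> i (Suc q) * (1 - beta s i (Suc q) x)
          + (1 - boehm_coeff t \<xi> (i + 1) (Suc q)) * beta s i (Suc q) x) * bspl s (i + 1) q x"
proof (cases "bspl s (i + 1) q x = 0")
  case False
  have tm: "\<And>u v. u \<le> v \<Longrightarrow> t u \<le> t v" using mt by (auto intro: monoD)
  define A B C D where "A = t (i - 1)" and "B = t i" and "C = t (i + int q)"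
    and "D = t (i + int q + 1)"
  have ix: "i - 1 + int (Suc q) = i + int q" "i + int (Suc q) = i + int q + 1"
    "i + 1 + int q - 1 = i + int q" "i + 1 + int (Suc q) - 1 = i + int q + 1"
    "i + int (Suc q) - 1 = i + int q" "i + 1 - 1 = i" by auto
  have Ax: "A \<le> \<xi>" unfolding A_def using tm[of "i - 1" "m - 1"] im m1 by auto
  have AB: "A \<le> B" "B \<le> C" "C \<le> D" unfolding A_def B_def C_def D_def by (auto intro: tm)
  have supp: "s i \<le> x" "x < s (i + int q + 1)"
    using bspl_support[OF mono_insert_knot[OF mt m1 m2] False[unfolded s]] s
    by (auto simp: ac_simps)
  have eqs: "beta t (i - 1) (Suc q) x = (if A \<noteq> C then (x - A) / (C - A) else 0)"
    "beta t i (Suc q) x = (if B \<noteq> D then (x - B) / (D - B) else 0)"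
    "beta s i (Suc q) x = (if s i \<noteq> s (i + int q + 1)
        then (x - s i) / (s (i + int q + 1) - s i) else 0)"
    "boehm_coeff t \<xi> (i + 1) q = (if C \<le> \<xi> then 1 else if \<xi> \<le> B then 0 else (\<xi> - B) / (C - B))"
    "boehm_coeff t \<xi> i (Suc q) = (if C \<le> \<xi> then 1 else if \<xi> \<le> A then 0 else (\<xi> - A) / (C - A))"
    "boehm_coeff t \<xi> (i + 1) (Suc q) =
       (if D \<le> \<xi> then 1 else if \<xi> \<le> B then 0 else (\<xi> - B) / (D - B))"
    unfolding beta_def boehm_coeff_def ix A_def B_def C_def D_def by (simp_all add: ac_simps)
  consider "m = i" | "i < m \<and> m \<le> i + int q" | "m = i + int q + 1" using im by linarith
  then have "beta t (i - 1) (Suc q) x * (1 - boehm_coeff t \<xi> (i + 1) q)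
          + (1 - beta t i (Suc q) x) * boehm_coeff t \<xi> (i + 1) q
      = boehm_coeff t \<xi> i (Suc q) * (1 - beta s i (Suc q) x)
          + (1 - boehm_coeff t \<xi> (i + 1) (Suc q)) * beta s i (Suc q) x"
  proof cases
    case 1
    then have "s i = \<xi>" "s (i + int q + 1) = C" "\<xi> < B"
      unfolding s insert_knot_def C_def B_def using m2 by auto
    moreover from this have "C - A \<noteq> 0" "C - \<xi> \<noteq> 0" using Ax AB by auto
    ultimately show ?thesis unfolding eqs using Ax AB
      by (simp add: divide_simps; simp add: algebra_simps)
  next
    case 2
    then have "s i = B" "s (i + int q + 1) = C" "B \<le> \<xi>" "\<xi> < C"
      unfolding s insert_knot_def C_def B_def
      using m1 m2 tm[of i "m - 1"] tm[of m "i + int q"] by auto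
    moreover from this have "C - A \<noteq> 0" "C - B \<noteq> 0" "D - B \<noteq> 0" using Ax AB by auto
    ultimately show ?thesis unfolding eqs using Ax AB
      by (simp add: divide_simps; simp add: algebra_simps)
  next
    case 3
    then have "s i = B" "s (i + int q + 1) = \<xi>" "C \<le> \<xi>" "\<xi> < D"
      unfolding s insert_knot_def B_def C_def D_def using m1 m2 by auto
    moreover from this have "B < \<xi>" using supp by auto
    ultimately show ?thesis unfolding eqs using AB
      by (simp add: divide_simps; simp add: algebra_simps)
  qed
  then show ?thesis by simp
qed simp

lemma boehm_step_last:
  assumes mt: "mono t" and m1: "t (m - 1) \<le> \<xi>" and m2: "\<xi> < t m"
    and im: "i \<le> m" "m \<le> i + int q + 1"
    and s: "s = insert_knot t m \<xi>"
  shows "(1 - beta t i (Suc q) x) * (1 - boehm_coeff t \<xi> (i + 2) q) * bspl s (i + 2) q x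
       = (1 - boehm_coeff t \<xi> (i + 1) (Suc q)) * (1 - beta s (i + 1) (Suc q) x) * bspl s (i + 2) q x"
proof -
  have tm: "\<And>u v. u \<le> v \<Longrightarrow> t u \<le> t v" using mt by (auto intro: monoD)
  define B B1 D where "B = t i" and "B1 = t (i + 1)" and "D = t (i + int q + 1)"
  have ix: "i + int (Suc q) = i + int q + 1" "i + 1 + int (Suc q) = i + int q + 2"
    "i + 2 + int q - 1 = i + int q + 1" "i + 2 - 1 = i + 1" "i + 1 + int (Suc q) - 1 = i + int q + 1"
    "i + 1 - 1 = i" by auto
  have sD: "s (i + int q + 2) = D" unfolding s insert_knot_def D_def using im by (simp add: ac_simps)
  have xD: "\<xi> < D" unfolding D_def using tm[of m "i + int q + 1"] im m2 by auto
  have BD: "B \<le> B1" "B1 \<le> D" unfolding B_def B1_def D_def by (auto intro: tm)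
  have eqs: "beta t i (Suc q) x = (if B \<noteq> D then (x - B) / (D - B) else 0)"
    "beta s (i + 1) (Suc q) x = (if s (i + 1) \<noteq> D then (x - s (i + 1)) / (D - s (i + 1)) else 0)"
    "boehm_coeff t \<xi> (i + 2) q =
       (if D \<le> \<xi> then 1 else if \<xi> \<le> B1 then 0 else (\<xi> - B1) / (D - B1))"
    "boehm_coeff t \<xi> (i + 1) (Suc q) =
       (if D \<le> \<xi> then 1 else if \<xi> \<le> B then 0 else (\<xi> - B) / (D - B))"
    unfolding beta_def boehm_coeff_def ix sD B_def B1_def D_def by (simp_all add: ac_simps)
  consider "m = i" | "m = i + 1" | "i + 2 \<le> m" using im by linarith
  then have "(1 - beta t i (Suc q) x) * (1 - boehm_coeff t \<xi> (i + 2) q)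
      = (1 - boehm_coeff t \<xi> (i + 1) (Suc q)) * (1 - beta s (i + 1) (Suc q) x)"
  proof cases
    case 1
    then have "s (i + 1) = B" "\<xi> < B" unfolding s insert_knot_def B_def using m2 by auto
    then show ?thesis unfolding eqs using BD xD by auto
  next
    case 2
    then have "s (i + 1) = \<xi>" "B \<le> \<xi>" "\<xi> < B1"
      unfolding s insert_knot_def B_def B1_def using m1 m2 by auto
    moreover from this have "D - B \<noteq> 0" "D - \<xi> \<noteq> 0" using xD BD by auto
    ultimately show ?thesis unfolding eqs using xD BD
      by (simp add: divide_simps; simp add: algebra_simps)
  next
    case 3
    then have "s (i + 1) = B1" "B1 \<le> \<xi>"
      unfolding s insert_knot_def B1_def using m1 tm[of "i + 1" "m - 1"] by auto
    moreover from this have "D - B \<noteq> 0" "D - B1 \<noteq> 0" using xD BD by auto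
    ultimately show ?thesis unfolding eqs using xD BD
      by (simp add: divide_simps; simp add: algebra_simps)
  qed
  then show ?thesis by simp
qed

lemma bspl_insert_knot:
  assumes mt: "mono t" and m1: "t (m - 1) \<le> \<xi>" and m2: "\<xi> < t m"
  shows "bspl t i q x = boehm_coeff t \<xi> i q * bspl (insert_knot t m \<xi>) i q x
            + (1 - boehm_coeff t \<xi> (i + 1) q) * bspl (insert_knot t m \<xi>) (i + 1) q x"
proof (induction q arbitrary: i)
  case 0
  show ?case
  proof (cases "m < i \<or> i + int 0 < m")
    case True then show ?thesis using bspl_insert_knot_outside[OF assms True] by simp
  next
    case False
    then have "i = m" by auto
    then show ?thesis using m1 m2 boehm_coeff_eq_1[of t i 0 \<xi>] boehm_coeff_eq_0[of \<xi> t "i + 1" 0]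
      by (auto simp: insert_knot_def)
  qed
next
  case (Suc q)
  show ?case
  proof (cases "m < i \<or> i + int (Suc q) < m")
    case True then show ?thesis using bspl_insert_knot_outside[OF assms True] by simp
  next
    case False
    then have im: "i \<le> m" "m \<le> i + int q + 1" by auto
    define s where "s = insert_knot t m \<xi>"
    define l where "l j r = boehm_coeff t \<xi> j r" for j r
    have "bspl t i (Suc q) x
        = beta t (i - 1) (Suc q) x * (l i q * bspl s i q x + (1 - l (i + 1) q) * bspl s (i + 1) q x)
          + (1 - beta t i (Suc q) x)
            * (l (i + 1) q * bspl s (i + 1) q x + (1 - l (i + 2) q) * bspl s (i + 2) q x)"
      using Suc.IH[of i] Suc.IH[of "i + 1"] by (simp add: s_def l_def add.assoc)
    also have "\<dots> = beta t (i - 1) (Suc q) x * l i q * bspl s i q x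
        + (beta t (i - 1) (Suc q) x * (1 - l (i + 1) q)
           + (1 - beta t i (Suc q) x) * l (i + 1) q) * bspl s (i + 1) q x
        + (1 - beta t i (Suc q) x) * (1 - l (i + 2) q) * bspl s (i + 2) q x"
      by (simp add: algebra_simps)
    also have "\<dots> = l i (Suc q) * beta s (i - 1) (Suc q) x * bspl s i q x
        + (l i (Suc q) * (1 - beta s i (Suc q) x)
           + (1 - l (i + 1) (Suc q)) * beta s i (Suc q) x) * bspl s (i + 1) q x
        + (1 - l (i + 1) (Suc q)) * (1 - beta s (i + 1) (Suc q) x) * bspl s (i + 2) q x"
      unfolding l_def
      by (simp only: boehm_step_first[OF assms im s_def] boehm_step_middle[OF assms im s_def]
          boehm_step_last[OF assms im s_def])
    also have "\<dots> = l i (Suc q) * bspl s i (Suc q) x + (1 - l (i + 1) (Suc q)) * bspl s (i + 1) (Suc q) x"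
      by (simp add: algebra_simps add.assoc)
    finally show ?thesis by (simp add: s_def l_def)
  qed
qed

text \<open>Coefficients of a spline \<open>\<Sum>j\<in>I. f j * bspl t j q\<close> after inserting \<open>\<xi>\<close>.\<close>

definition inserted_coeffs :: "(int \<Rightarrow> real) \<Rightarrow> real \<Rightarrow> nat \<Rightarrow> int set \<Rightarrow> (int \<Rightarrow> real) \<Rightarrow> int \<Rightarrow> real"
  where "inserted_coeffs t \<xi> q I f k =
    boehm_coeff t \<xi> k q * (if k \<in> I then f k else 0)
    + (1 - boehm_coeff t \<xi> k q) * (if k - 1 \<in> I then f (k - 1) else 0)"

lemma sum_int_shift: "(\<Sum>j\<in>{l..u::int}. g (j + 1)) = (\<Sum>k\<in>{l + 1..u + 1}. g k)"
  by (rule sum.reindex_bij_witness[where i = "\<lambda>k. k - 1" and j = "\<lambda>j. j + 1"]) auto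

lemma sum_bspl_insert_knot:
  assumes "mono t" "t (m - 1) \<le> \<xi>" "\<xi> < t m"
  shows "(\<Sum>j\<in>{l..u}. f j * bspl t j q x)
       = (\<Sum>k\<in>{l..u + 1}. inserted_coeffs t \<xi> q {l..u} f k * bspl (insert_knot t m \<xi>) k q x)"
proof -
  define S where "S k = bspl (insert_knot t m \<xi>) k q x" for k
  define c where "c k = boehm_coeff t \<xi> k q" for k
  define f0 where "f0 k = (if k \<in> {l..u} then f k else 0)" for k
  have "(\<Sum>j\<in>{l..u}. f j * bspl t j q x)
      = (\<Sum>j\<in>{l..u}. f0 j * c j * S j) + (\<Sum>j\<in>{l..u}. f0 (j + 1 - 1) * (1 - c (j + 1)) * S (j + 1))"
    unfolding bspl_insert_knot[OF assms, of _ q x] S_def c_def f0_def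
    by (simp add: sum.distrib[symmetric] algebra_simps)
  also have "(\<Sum>j\<in>{l..u}. f0 j * c j * S j) = (\<Sum>k\<in>{l..u + 1}. f0 k * c k * S k)"
    by (rule sum.mono_neutral_left) (auto simp: f0_def)
  also have "(\<Sum>j\<in>{l..u}. f0 (j + 1 - 1) * (1 - c (j + 1)) * S (j + 1))
      = (\<Sum>k\<in>{l + 1..u + 1}. f0 (k - 1) * (1 - c k) * S k)"
    by (rule sum_int_shift)
  also have "\<dots> = (\<Sum>k\<in>{l..u + 1}. f0 (k - 1) * (1 - c k) * S k)"
    by (rule sum.mono_neutral_left) (auto simp: f0_def)
  finally show ?thesis
    unfolding inserted_coeffs_def S_def c_def f0_def by (simp add: sum.distrib[symmetric] algebra_simps)
qed

section \<open>Knot sequences from multiplicity functions\<close>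

text \<open>Entry \<open>n\<close> of the sorted knot list with repetitions is the node \<open>z\<close> with
  \<open>mult_below S m z \<le> n < mult_upto S m z\<close>.\<close>

definition mult_below :: "real set \<Rightarrow> (real \<Rightarrow> nat) \<Rightarrow> real \<Rightarrow> nat" where
  "mult_below S m z = (\<Sum>z'\<in>{z'\<in>S. z' < z}. m z')"

definition mult_upto :: "real set \<Rightarrow> (real \<Rightarrow> nat) \<Rightarrow> real \<Rightarrow> nat" where
  "mult_upto S m z = (\<Sum>z'\<in>{z'\<in>S. z' \<le> z}. m z')"

lemma mult_below_le_upto: "finite S \<Longrightarrow> mult_below S m z \<le> mult_upto S m z"
  unfolding mult_below_def mult_upto_def by (rule sum_mono2) auto

lemma mult_upto_mono: "finite S \<Longrightarrow> z1 \<le> z2 \<Longrightarrow> mult_upto S m z1 \<le> mult_upto S m z2"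
  unfolding mult_upto_def by (rule sum_mono2) auto

lemma mult_upto_le_below: "finite S \<Longrightarrow> z1 < z2 \<Longrightarrow> mult_upto S m z1 \<le> mult_below S m z2"
  unfolding mult_below_def mult_upto_def by (rule sum_mono2) auto

lemma mult_upto_eq: "finite S \<Longrightarrow> z \<in> S \<Longrightarrow> mult_upto S m z = mult_below S m z + m z"
proof -
  assume "finite S" "z \<in> S"
  moreover have "{z'\<in>S. z' \<le> z} = insert z {z'\<in>S. z' < z}" using \<open>z \<in> S\<close> by auto
  ultimately show ?thesis unfolding mult_below_def mult_upto_def by simp
qed

lemma mult_range_unique:
  assumes "finite S" "z1 \<in> S" "z2 \<in> S" "mult_below S m z1 \<le> n" "n < mult_upto S m z1"
    "mult_below S m z2 \<le> n" "n < mult_upto S m z2"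
  shows "z1 = z2"
  using mult_upto_le_below[OF assms(1), of z1 z2 m] mult_upto_le_below[OF assms(1), of z2 z1 m] assms
  by (cases z1 z2 rule: linorder_cases) auto

lemma nth_concat_replicate:
  assumes "sorted xs" "distinct xs" "\<forall>z\<in>set xs. 0 < m z"
    "n < length (concat (map (\<lambda>z. replicate (m z) z) xs))"
  shows "concat (map (\<lambda>z. replicate (m z) z) xs) ! n \<in> set xs \<and>
    mult_below (set xs) m (concat (map (\<lambda>z. replicate (m z) z) xs) ! n) \<le> n \<and>
    n < mult_upto (set xs) m (concat (map (\<lambda>z. replicate (m z) z) xs) ! n)"
  using assms
proof (induction xs arbitrary: n)
  case Nil then show ?case by simp
next
  case (Cons y ys)
  have y_less: "\<forall>z\<in>set ys. y < z" using Cons.prems(1,2) by (auto simp: le_less)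
  show ?case
  proof (cases "n < m y")
    case True
    have "mult_below (set (y # ys)) m y = 0" unfolding mult_below_def using y_less
      by (auto intro: sum.neutral)
    moreover have "{z' \<in> set (y # ys). z' \<le> y} = {y}" using y_less by auto
    ultimately show ?thesis using True by (simp add: nth_append mult_upto_def)
  next
    case False
    define z where "z = concat (map (\<lambda>z. replicate (m z) z) ys) ! (n - m y)"
    have IH: "z \<in> set ys \<and> mult_below (set ys) m z \<le> n - m y \<and> n - m y < mult_upto (set ys) m z"
      using Cons.IH[of "n - m y"] Cons.prems False unfolding z_def by auto
    then have "y < z" using y_less by auto
    then have "{z' \<in> set (y # ys). z' < z} = insert y {z' \<in> set ys. z' < z}"
      "{z' \<in> set (y # ys). z' \<le> z} = insert y {z' \<in> set ys. z' \<le> z}"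
      and "y \<notin> set ys" using Cons.prems(2) by auto
    then have "mult_below (set (y # ys)) m z = m y + mult_below (set ys) m z"
      "mult_upto (set (y # ys)) m z = m y + mult_upto (set ys) m z"
      unfolding mult_below_def mult_upto_def by simp_all
    then show ?thesis using IH False unfolding z_def by (auto simp: nth_append)
  qed
qed

lemma length_concat_replicate:
  "distinct xs \<Longrightarrow> length (concat (map (\<lambda>z. replicate (m z) z) xs)) = (\<Sum>z\<in>set xs. m z)"
  by (induction xs) auto

definition total_mult :: "knotvec \<Rightarrow> nat" where
  "total_mult K = (\<Sum>z\<in>nodes_par K. K z)"

lemma nth_knots_list:
  assumes "finite (nodes_par K)" "n < total_mult K"
  shows "knots_list K ! n \<in> nodes_par K \<and> mult_below (nodes_par K) K (knots_list K ! n) \<le> n \<and>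
     n < mult_upto (nodes_par K) K (knots_list K ! n)"
proof -
  have s: "set (zs K) = nodes_par K" "sorted (zs K)" "distinct (zs K)"
    using assms(1) unfolding zs_def by auto
  have pos: "\<forall>z\<in>set (zs K). 0 < K z" using s unfolding nodes_par_def by auto
  have "length (knots_list K) = total_mult K" unfolding knots_list_def total_mult_def
    using length_concat_replicate[OF s(3)] s(1) by simp
  then show ?thesis using nth_concat_replicate[OF s(2,3) pos, of n] assms(2) s(1)
    unfolding knots_list_def by simp
qed

lemma nth_knots_listI:
  assumes "finite (nodes_par K)" "z \<in> nodes_par K" "mult_below (nodes_par K) K z \<le> n"
     "n < mult_upto (nodes_par K) K z"
  shows "n < total_mult K \<and> knots_list K ! n = z"
proof -
  have "mult_upto (nodes_par K) K z \<le> total_mult K" unfolding mult_upto_def total_mult_def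
    using assms(1) by (rule sum_mono2) auto
  then have n: "n < total_mult K" using assms by simp
  with nth_knots_list[OF assms(1) n] show ?thesis
    using mult_range_unique[OF assms(1) _ assms(2)] assms(3,4) by blast
qed

text \<open>Unlike \<open>is_knotvec\<close>, this does not involve the parametrization and only bounds interior
  multiplicities by \<open>p + 1\<close>; it is therefore inherited by every intermediate knot vector
  along a chain of single knot insertions.\<close>

definition admissible_knotvec :: "real \<Rightarrow> real \<Rightarrow> nat \<Rightarrow> knotvec \<Rightarrow> bool" where
  "admissible_knotvec a b p K \<longleftrightarrow> a < b \<and> finite (nodes_par K) \<and> nodes_par K \<subseteq> {a..b} \<and>
     K a = p + 1 \<and> K b = p + 1 \<and> (\<forall>z. K z \<le> p + 1)"

locale knot_extension =
  fixes a b :: real and p :: nat and lo hi :: "nat \<Rightarrow> real"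
  assumes a_less_b: "a < b" and lo0: "lo 0 \<le> a" and lo_dec: "\<And>k. lo (Suc k) \<le> lo k"
    and hi0: "b \<le> hi 0" and hi_inc: "\<And>k. hi k \<le> hi (Suc k)"
begin

abbreviation T where "T K \<equiv> tk a p lo hi K"
abbreviation N where "N K \<equiv> int (Nk a K)"

lemma lo_mono: "k \<le> l \<Longrightarrow> lo l \<le> lo k"
  using decseq_SucI[of lo, OF lo_dec] by (simp add: decseqD)

lemma hi_mono: "k \<le> l \<Longrightarrow> hi k \<le> hi l"
  using incseq_SucI[of hi, OF hi_inc] by (simp add: incseqD)

lemma lo_le_a: "lo k \<le> a"
  using lo_mono[of 0 k] lo0 by simp

lemma b_le_hi: "b \<le> hi k"
  using hi_mono[of 0 k] hi0 by simp

context
  fixes K assumes K: "admissible_knotvec a b p K"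
begin

lemma a_node: "a \<in> nodes_par K"
  and b_node: "b \<in> nodes_par K"
  and finite_nodes: "finite (nodes_par K)"
  and node_in_ab: "z \<in> nodes_par K \<Longrightarrow> a \<le> z \<and> z \<le> b"
  using K unfolding admissible_knotvec_def nodes_par_def by auto

lemma total_mult_eq: "total_mult K = Nk a K + p + 1"
proof -
  have "total_mult K = K a + (\<Sum>z\<in>nodes_par K - {a}. K z)"
    unfolding total_mult_def using a_node finite_nodes by (simp add: sum.remove)
  then show ?thesis using K unfolding Nk_def admissible_knotvec_def by simp
qed

lemma mult_below_a: "mult_below (nodes_par K) K a = 0"
  unfolding mult_below_def using node_in_ab by (force intro: sum.neutral)

lemma mult_upto_a: "mult_upto (nodes_par K) K a = p + 1"
proof -
  have "{z' \<in> nodes_par K. z' \<le> a} = {a}" using node_in_ab a_node by force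
  then show ?thesis unfolding mult_upto_def using K unfolding admissible_knotvec_def by simp
qed

lemma mult_upto_b: "mult_upto (nodes_par K) K b = total_mult K"
proof -
  have "{z' \<in> nodes_par K. z' \<le> b} = nodes_par K" using node_in_ab by force
  then show ?thesis unfolding mult_upto_def total_mult_def by simp
qed

lemma mult_below_b: "mult_below (nodes_par K) K b = Nk a K"
  using mult_upto_eq[OF finite_nodes b_node, of K] mult_upto_b total_mult_eq K
  unfolding admissible_knotvec_def by simp

lemma N_ge: "int p + 1 \<le> N K"
proof -
  have "K b \<le> Nk a K"
    unfolding Nk_def using b_node a_less_b finite_nodes by (intro member_le_sum) auto
  then show ?thesis using K unfolding admissible_knotvec_def by simp
qed

lemma T_node:
  assumes "- int p \<le> i" "i \<le> N K"
  shows "T K i \<in> nodes_par K \<and> int (mult_below (nodes_par K) K (T K i)) \<le> i + int p \<and>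
     i + int p < int (mult_upto (nodes_par K) K (T K i))"
proof -
  have "nat (i + int p) < total_mult K" using total_mult_eq assms by linarith
  from nth_knots_list[OF finite_nodes this] assms show ?thesis
    unfolding tk_def by auto
qed

lemma T_eqI:
  assumes z: "z \<in> nodes_par K"
    and c: "int (mult_below (nodes_par K) K z) \<le> i + int p"
      "i + int p < int (mult_upto (nodes_par K) K z)"
  shows "- int p \<le> i \<and> i \<le> N K \<and> T K i = z"
proof -
  have i0: "- int p \<le> i" using c by linarith
  have "mult_below (nodes_par K) K z \<le> nat (i + int p)"
    "nat (i + int p) < mult_upto (nodes_par K) K z"
    using c by linarith+
  from nth_knots_listI[OF finite_nodes z this]
  have "nat (i + int p) < total_mult K" "knots_list K ! nat (i + int p) = z" by auto
  moreover from this have "i \<le> N K" using total_mult_eq by linarith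
  ultimately show ?thesis using i0 unfolding tk_def by simp
qed

lemma T_eq_a: "- int p \<le> i \<Longrightarrow> i \<le> 0 \<Longrightarrow> T K i = a"
  using T_eqI[OF a_node] mult_below_a mult_upto_a by simp

lemma T_eq_b: "N K - int p \<le> i \<Longrightarrow> i \<le> N K \<Longrightarrow> T K i = b"
  using T_eqI[OF b_node] mult_below_b mult_upto_b total_mult_eq by simp

lemma T_in_ab: "- int p \<le> i \<Longrightarrow> i \<le> N K \<Longrightarrow> a \<le> T K i \<and> T K i \<le> b"
  using T_node node_in_ab by blast

lemma T_mono_inner:
  assumes "- int p \<le> i" "i \<le> j" "j \<le> N K"
  shows "T K i \<le> T K j"
proof (rule ccontr)
  assume "\<not> T K i \<le> T K j"
  then have "mult_upto (nodes_par K) K (T K j) \<le> mult_below (nodes_par K) K (T K i)"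
    by (intro mult_upto_le_below[OF finite_nodes]) simp
  then show False using T_node[of i] T_node[of j] assms by auto
qed

lemma mono_T: "mono (T K)"
proof (rule monoI)
  fix i j :: int assume ij: "i \<le> j"
  have T_below: "k < - int p \<Longrightarrow> T K k = lo (nat (- int p - 1 - k))" for k
    unfolding tk_def by simp
  have T_above: "N K < k \<Longrightarrow> T K k = hi (nat (k - N K - 1))" for k
    unfolding tk_def by simp
  consider "i < - int p" "j < - int p" | "i < - int p" "- int p \<le> j" "j \<le> N K"
    | "i \<le> N K" "N K < j" | "- int p \<le> i" "j \<le> N K" | "N K < i" by linarith
  then show "T K i \<le> T K j"
  proof cases
    case 1
    then show ?thesis unfolding T_below[OF 1(1)] T_below[OF 1(2)] using ij by (intro lo_mono) linarith
  next
    case 2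
    then show ?thesis unfolding T_below[OF 2(1)] using lo_le_a T_in_ab order_trans by blast
  next
    case 3
    have "T K i \<le> b"
    proof (cases "i < - int p")
      case True then show ?thesis unfolding T_below[OF True] using lo_le_a[of "nat (- int p - 1 - i)"] a_less_b by linarith
    qed (use T_in_ab 3 in auto)
    then show ?thesis unfolding T_above[OF 3(2)] using b_le_hi order_trans by blast
  next
    case 4 then show ?thesis using T_mono_inner ij by blast
  next
    case 5
    then have "N K < j" using ij by simp
    then show ?thesis unfolding T_above[OF 5] T_above[OF \<open>N K < j\<close>] using ij
      by (intro hi_mono) linarith
  qed
qed

lemma a_less_T: "1 \<le> i \<Longrightarrow> a < T K i"
proof (cases "i \<le> N K")
  case True
  moreover assume "1 \<le> i"
  ultimately have "T K i \<in> nodes_par K" "i + int p < int (mult_upto (nodes_par K) K (T K i))"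
    using T_node[of i] by simp_all
  moreover have "T K i \<noteq> a" using calculation(2) mult_upto_a \<open>1 \<le> i\<close> by auto
  ultimately show ?thesis using node_in_ab by force
next
  case False
  then show ?thesis using b_le_hi[of "nat (i - N K - 1)"] a_less_b by (simp add: tk_def)
qed

lemma T_less_b: "i \<le> N K - int p - 1 \<Longrightarrow> T K i < b"
proof (cases "- int p \<le> i")
  case True
  moreover assume "i \<le> N K - int p - 1"
  ultimately have "T K i \<in> nodes_par K" "int (mult_below (nodes_par K) K (T K i)) \<le> i + int p"
    using T_node[of i] by simp_all
  moreover have "T K i \<noteq> b" using calculation(2) mult_below_b \<open>i \<le> N K - int p - 1\<close> by auto
  ultimately show ?thesis using node_in_ab by force
next
  case False
  then show ?thesis using lo_le_a[of "nat (- int p - 1 - i)"] a_less_b by (simp add: tk_def)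
qed

lemma T_eq_a_iff:
  assumes "k \<in> idx a p K"
  shows "T K (k + int p - 1) = a \<longleftrightarrow> k = 1 - int p"
proof
  assume "T K (k + int p - 1) = a"
  then have "\<not> 1 \<le> k + int p - 1" using a_less_T[of "k + int p - 1"] by auto
  then show "k = 1 - int p" using assms unfolding idx_def by simp
qed (simp add: T_eq_a)

lemma T_eq_b_iff:
  assumes "k \<in> idx a p K"
  shows "T K k = b \<longleftrightarrow> k = N K - int p"
proof
  assume "T K k = b"
  then have "\<not> k \<le> N K - int p - 1" using T_less_b[of k] by auto
  then show "k = N K - int p" using assms unfolding idx_def by simp
qed (use assms N_ge in \<open>simp add: T_eq_b idx_def\<close>)

text \<open>No knot has multiplicity above \<open>p + 1\<close>, so each B-spline window is a proper interval.\<close>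

lemma T_window_proper:
  assumes i: "1 - int p \<le> i" "i \<le> N K - int p"
  shows "T K (i - 1) < T K (i + int p)"
proof (rule ccontr)
  assume "\<not> ?thesis"
  moreover have "T K (i - 1) \<le> T K (i + int p)" by (rule monoD[OF mono_T]) simp
  ultimately have eq: "T K (i - 1) = T K (i + int p)" by simp
  have below: "int (mult_below (nodes_par K) K (T K (i - 1))) \<le> i - 1 + int p"
    and node: "T K (i - 1) \<in> nodes_par K"
    using T_node[of "i - 1"] i by simp_all
  have "i + int p + int p < int (mult_upto (nodes_par K) K (T K (i - 1)))"
    using T_node[of "i + int p"] i eq by simp
  moreover have "mult_upto (nodes_par K) K (T K (i - 1))
      = mult_below (nodes_par K) K (T K (i - 1)) + K (T K (i - 1))"
    by (rule mult_upto_eq[OF finite_nodes node])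
  moreover have "K (T K (i - 1)) \<le> p + 1" using K unfolding admissible_knotvec_def by auto
  ultimately show False using below by linarith
qed

end

end

context knot_extension
begin

context
  fixes K K' :: knotvec and \<xi> :: real
  assumes K: "admissible_knotvec a b p K" and \<xi>: "a < \<xi>" "\<xi> < b" and K\<xi>: "K \<xi> \<le> p"
    and K': "K' = K(\<xi> := Suc (K \<xi>))"
begin

lemma sum_mult_insert:
  "(\<Sum>z\<in>{z\<in>nodes_par K'. P z}. K' z) = (\<Sum>z\<in>{z\<in>nodes_par K. P z}. K z) + (if P \<xi> then 1 else 0)"
proof -
  define F where "F = {z \<in> insert \<xi> (nodes_par K). P z}"
  have fin: "finite F" unfolding F_def using finite_nodes[OF K] by simp
  have "(\<Sum>z\<in>{z\<in>nodes_par K'. P z}. K' z) = (\<Sum>z\<in>F. K z + (if z = \<xi> then 1 else 0))"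
    unfolding F_def K' nodes_par_def by (intro sum.cong) auto
  also have "\<dots> = (\<Sum>z\<in>F. K z) + (if P \<xi> then 1 else 0)"
    using fin by (simp add: sum.distrib sum.delta F_def)
  also have "(\<Sum>z\<in>F. K z) = (\<Sum>z\<in>{z\<in>nodes_par K. P z}. K z)"
    using fin by (intro sum.mono_neutral_right) (auto simp: F_def nodes_par_def)
  finally show ?thesis .
qed

lemma mult_below_insert:
  "mult_below (nodes_par K') K' z = mult_below (nodes_par K) K z + (if \<xi> < z then 1 else 0)"
  unfolding mult_below_def by (rule sum_mult_insert)

lemma mult_upto_insert:
  "mult_upto (nodes_par K') K' z = mult_upto (nodes_par K) K z + (if \<xi> \<le> z then 1 else 0)"
  unfolding mult_upto_def by (rule sum_mult_insert)

lemma admissible_insert: "admissible_knotvec a b p K'"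
proof -
  have "nodes_par K' = insert \<xi> (nodes_par K)" unfolding K' nodes_par_def by auto
  then show ?thesis using K \<xi> K\<xi> unfolding admissible_knotvec_def by (auto simp: K')
qed

lemma N_insert: "N K' = N K + 1"
  using sum_mult_insert[of "\<lambda>_. True"] total_mult_eq[OF K] total_mult_eq[OF admissible_insert]
  unfolding total_mult_def by simp

context
  fixes m :: int assumes m: "m = int (mult_upto (nodes_par K) K \<xi>) - int p"
begin

lemma insert_index_bounds: "1 \<le> m" "m \<le> N K - int p"
proof -
  show "1 \<le> m"
    using mult_upto_mono[OF finite_nodes[OF K], of a \<xi> K] mult_upto_a[OF K] \<xi> m by simp
  show "m \<le> N K - int p"
    using mult_upto_le_below[OF finite_nodes[OF K] \<xi>(2), of K] mult_below_b[OF K] m by simp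
qed

lemma T_le_insert_point: "j < m \<Longrightarrow> T K j \<le> \<xi>"
proof -
  assume "j < m"
  have "T K (m - 1) \<le> \<xi>"
  proof (rule ccontr)
    assume "\<not> T K (m - 1) \<le> \<xi>"
    then have "mult_upto (nodes_par K) K \<xi> \<le> mult_below (nodes_par K) K (T K (m - 1))"
      by (intro mult_upto_le_below[OF finite_nodes[OF K]]) simp
    then show False using T_node[OF K, of "m - 1"] insert_index_bounds m by simp
  qed
  moreover have "T K j \<le> T K (m - 1)" using \<open>j < m\<close> by (intro monoD[OF mono_T[OF K]]) simp
  ultimately show ?thesis by simp
qed

lemma insert_point_less_T: "m \<le> j \<Longrightarrow> \<xi> < T K j"
proof -
  assume "m \<le> j"
  have "\<xi> < T K m"
  proof (rule ccontr)
    assume "\<not> \<xi> < T K m"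
    then have "mult_upto (nodes_par K) K (T K m) \<le> mult_upto (nodes_par K) K \<xi>"
      by (intro mult_upto_mono[OF finite_nodes[OF K]]) simp
    then show False using T_node[OF K, of m] insert_index_bounds m by simp
  qed
  moreover have "T K m \<le> T K j" using \<open>m \<le> j\<close> by (intro monoD[OF mono_T[OF K]])
  ultimately show ?thesis by simp
qed

lemma T_insert: "T K' = insert_knot (T K) m \<xi>"
proof
  fix j
  have K'_nodes: "nodes_par K \<subseteq> nodes_par K'" "\<xi> \<in> nodes_par K'"
    unfolding K' nodes_par_def by auto
  note bounds = insert_index_bounds
  consider "j < - int p" | "- int p \<le> j" "j < m" | "j = m" | "m < j" "j \<le> N K + 1" | "N K + 1 < j"
    by linarith
  then show "T K' j = insert_knot (T K) m \<xi> j"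
  proof cases
    case 1
    then show ?thesis using bounds unfolding insert_knot_def by (simp add: tk_def)
  next
    case 2
    then have "T K' j = T K j"
      using T_node[OF K, of j] T_le_insert_point[of j] bounds K'_nodes
        mult_below_insert[of "T K j"] mult_upto_insert[of "T K j"]
      by (intro conjunct2[OF conjunct2[OF T_eqI[OF admissible_insert]]]) auto
    then show ?thesis using 2 unfolding insert_knot_def by simp
  next
    case 3
    then have "T K' j = \<xi>"
      using mult_below_le_upto[OF finite_nodes[OF K], of K \<xi>] K'_nodes
        mult_below_insert[of \<xi>] mult_upto_insert[of \<xi>] m
      by (intro conjunct2[OF conjunct2[OF T_eqI[OF admissible_insert]]]) auto
    then show ?thesis using 3 unfolding insert_knot_def by simp
  next
    case 4
    then have "T K' j = T K (j - 1)"
      using T_node[OF K, of "j - 1"] insert_point_less_T[of "j - 1"] bounds K'_nodes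
        mult_below_insert[of "T K (j - 1)"] mult_upto_insert[of "T K (j - 1)"]
      by (intro conjunct2[OF conjunct2[OF T_eqI[OF admissible_insert]]]) auto
    then show ?thesis using 4 unfolding insert_knot_def by simp
  next
    case 5
    then show ?thesis using bounds N_insert unfolding insert_knot_def by (simp add: tk_def)
  qed
qed

end

end

end

context knot_extension
begin

abbreviation B where "B K j x \<equiv> bspl (T K) j p x"

text \<open>Knot insertion keeps
  the two end coefficients and forms convex combinations of neighbouring ones, whence the last two
  clauses.\<close>

definition refined_coeffs :: "knotvec \<Rightarrow> knotvec \<Rightarrow> (int \<Rightarrow> real) \<Rightarrow> (int \<Rightarrow> real) \<Rightarrow> bool" where
  "refined_coeffs K K' f f' \<longleftrightarrow>
     (\<forall>x. (\<Sum>j\<in>idx a p K. f j * B K j x) = (\<Sum>k\<in>idx a p K'. f' k * B K' k x)) \<and>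
     f' (1 - int p) = f (1 - int p) \<and> f' (N K' - int p) = f (N K - int p) \<and>
     ((\<forall>j\<in>idx a p K. 0 < f j) \<longrightarrow> (\<forall>k\<in>idx a p K'. 0 < f' k))"

lemma refined_coeffs_refl: "refined_coeffs K K f f"
  unfolding refined_coeffs_def by auto

lemma refined_coeffs_trans:
  "refined_coeffs K K1 f f1 \<Longrightarrow> refined_coeffs K1 K2 f1 f2 \<Longrightarrow> refined_coeffs K K2 f f2"
  unfolding refined_coeffs_def by auto

lemma refined_coeffs_insert:
  assumes K: "admissible_knotvec a b p K" and \<xi>: "a < \<xi>" "\<xi> < b" and K\<xi>: "K \<xi> \<le> p"
  shows "refined_coeffs K (K(\<xi> := Suc (K \<xi>))) f (inserted_coeffs (T K) \<xi> p (idx a p K) f)"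
proof -
  define K' where "K' = K(\<xi> := Suc (K \<xi>))"
  define m where "m = int (mult_upto (nodes_par K) K \<xi>) - int p"
  define f' where "f' = inserted_coeffs (T K) \<xi> p (idx a p K) f"
  define c where "c k = boehm_coeff (T K) \<xi> k p" for k
  note insert_facts = T_insert[OF K \<xi> K\<xi> K'_def m_def] N_insert[OF K \<xi> K\<xi> K'_def]
    T_le_insert_point[OF K \<xi> K\<xi> K'_def m_def] insert_point_less_T[OF K \<xi> K\<xi> K'_def m_def]
  have Np: "int p + 1 \<le> N K" by (rule N_ge[OF K])
  have idx: "idx a p K = {1 - int p..N K - int p}" "idx a p K' = {1 - int p..N K - int p + 1}"
    unfolding idx_def using insert_facts(2) by simp_all
  have c_first: "c (1 - int p) = 1"
    unfolding c_def using T_eq_a[OF K, of 0] \<xi> by (intro boehm_coeff_eq_1) simp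
  have c_last: "c (N K - int p + 1) = 0"
    unfolding c_def using T_eq_b[OF K, of "N K - int p"] T_eq_b[OF K, of "N K"] \<xi> Np
    by (intro boehm_coeff_eq_0) simp_all
  have f'_eq: "f' k = c k * (if k \<in> idx a p K then f k else 0)
      + (1 - c k) * (if k - 1 \<in> idx a p K then f (k - 1) else 0)" for k
    unfolding f'_def c_def inserted_coeffs_def ..
  have sums: "(\<Sum>j\<in>idx a p K. f j * B K j x) = (\<Sum>k\<in>idx a p K'. f' k * B K' k x)" for x
    unfolding idx f'_def insert_facts(1)
    by (rule sum_bspl_insert_knot[OF mono_T[OF K]]) (use insert_facts(3,4) in auto)
  have N': "N K' - int p = N K - int p + 1" using insert_facts(2) by simp
  have "f' (N K - int p + 1) = f (N K - int p)"
    unfolding f'_eq c_last using Np by (simp add: idx)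
  moreover have "f' (1 - int p) = f (1 - int p)"
    unfolding f'_eq c_first using Np by (simp add: idx)
  ultimately have ends: "f' (1 - int p) = f (1 - int p)" "f' (N K' - int p) = f (N K - int p)"
    by (simp_all only: N')
  have "0 < f' k" if pos: "\<forall>j\<in>idx a p K. 0 < f j" and k: "k \<in> idx a p K'" for k
  proof -
    consider "k = 1 - int p" | "k = N K' - int p" | "k \<in> idx a p K" "k - 1 \<in> idx a p K"
      using k Np insert_facts(2) unfolding idx by force
    then show ?thesis
    proof cases
      case 3
      then have "0 < f k" "0 < f (k - 1)" using pos by auto
      moreover have "0 \<le> c k" "c k \<le> 1" using boehm_coeff_bounds unfolding c_def by auto
      ultimately have "0 < c k * f k + (1 - c k) * f (k - 1)"
        by (cases "c k = 0") (auto intro!: add_pos_nonneg)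
      then show ?thesis unfolding f'_eq using 3 by simp
    qed (use ends pos Np in \<open>auto simp: idx\<close>)
  qed
  then show ?thesis using sums ends unfolding refined_coeffs_def K'_def f'_def by blast
qed

lemma refined_coeffs_exists:
  assumes K: "admissible_knotvec a b p K" and K': "admissible_knotvec a b p K'"
    and le: "\<forall>z. K z \<le> K' z"
  shows "\<exists>f'. refined_coeffs K K' f f'"
  using K le
proof (induction "\<Sum>z\<in>nodes_par K'. K' z - K z" arbitrary: K f rule: less_induct)
  case less
  show ?case
  proof (cases "\<exists>\<xi>\<in>nodes_par K'. K \<xi> < K' \<xi>")
    case False
    then have "K = K'" using less.prems(2) unfolding nodes_par_def
      by (metis antisym_conv1 ext mem_Collect_eq not_gr0 le_zero_eq)
    then show ?thesis using refined_coeffs_refl by blast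
  next
    case True
    then obtain \<xi> where \<xi>: "\<xi> \<in> nodes_par K'" "K \<xi> < K' \<xi>" by blast
    have mults: "K a = p + 1" "K b = p + 1" "K' a = p + 1" "K' b = p + 1" "K' \<xi> \<le> p + 1"
      using less.prems(1) K' unfolding admissible_knotvec_def by auto
    then have "\<xi> \<noteq> a" "\<xi> \<noteq> b" using \<xi>(2) by auto
    then have ins: "a < \<xi>" "\<xi> < b" "K \<xi> \<le> p"
      using node_in_ab[OF K' \<xi>(1)] \<xi>(2) mults(5) by auto
    define K1 where "K1 = K(\<xi> := Suc (K \<xi>))"
    have "(\<Sum>z\<in>nodes_par K'. K' z - K1 z) < (\<Sum>z\<in>nodes_par K'. K' z - K z)"
      using \<xi> unfolding K1_def by (intro sum_strict_mono_ex1[OF finite_nodes[OF K']]) auto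
    moreover have "admissible_knotvec a b p K1" "\<forall>z. K1 z \<le> K' z"
      using admissible_insert[OF less.prems(1) ins K1_def] less.prems(2) \<xi>(2) by (auto simp: K1_def)
    ultimately obtain f' where "refined_coeffs K1 K' (inserted_coeffs (T K) \<xi> p (idx a p K) f) f'"
      using less.hyps by blast
    then show ?thesis
      using refined_coeffs_trans refined_coeffs_insert[OF less.prems(1) ins] unfolding K1_def by blast
  qed
qed

end

section \<open>Dual functionals\<close>

lemma abs_le_1_plus_square: "\<bar>x::real\<bar> \<le> 1 + x\<^sup>2"
proof (cases "\<bar>x\<bar> \<le> 1")
  case False
  then have "\<bar>x\<bar> * 1 \<le> \<bar>x\<bar> * \<bar>x\<bar>" by (intro mult_left_mono) auto
  then show ?thesis by (simp add: power2_eq_square abs_mult_self_eq)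
qed (simp add: add_increasing2)

lemma integrable_square_integrable_times_bounded:
  fixes F G :: "real \<Rightarrow> real"
  assumes F: "F \<in> borel_measurable (lebesgue_on {a..b})" "integrable (lebesgue_on {a..b}) (\<lambda>t. (F t)\<^sup>2)"
    and G: "G \<in> borel_measurable borel" "\<And>t. \<bar>G t\<bar> \<le> C"
  shows "integrable (lebesgue_on {a..b}) (\<lambda>t. F t * G t)"
proof (rule Bochner_Integration.integrable_bound)
  show "integrable (lebesgue_on {a..b}) (\<lambda>t. C * (1 + (F t)\<^sup>2))"
    using F(2) by (intro integrable_mult_right integrable_add) auto
  have "G \<in> borel_measurable (lebesgue_on {a..b})"
    using G(1) by (simp add: measurable_completion measurable_lborel1 measurable_restrict_space1)
  with F(1) show "(\<lambda>t. F t * G t) \<in> borel_measurable (lebesgue_on {a..b})"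
    by (rule borel_measurable_times)
  have "0 \<le> C" using G(2)[of 0] by simp
  then have "\<bar>F t\<bar> * \<bar>G t\<bar> \<le> (1 + (F t)\<^sup>2) * C" for t
    using abs_le_1_plus_square[of "F t"] G(2)[of t] by (intro mult_mono) auto
  with \<open>0 \<le> C\<close> show "AE t in lebesgue_on {a..b}. norm (F t * G t) \<le> norm (C * (1 + (F t)\<^sup>2))"
    by (simp add: abs_mult mult.commute)
qed

lemma dual_functional_sum:
  fixes F :: "real \<Rightarrow> real" and G :: "int \<Rightarrow> real \<Rightarrow> real"
  assumes F: "F \<in> borel_measurable (lebesgue_on {a..b})" "integrable (lebesgue_on {a..b}) (\<lambda>t. (F t)\<^sup>2)"
    and G: "\<And>j. G j \<in> borel_measurable borel" "\<And>j t. \<bar>G j t\<bar> \<le> C"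
    and dual: "\<forall>j\<in>I. (LINT t|lebesgue_on {a..b}. F t * G j t) = (if i = j then 1 else 0)"
    and I: "finite I" "i \<in> I"
  shows "(LINT t|lebesgue_on {a..b}. F t * (\<Sum>j\<in>I. f j * G j t)) = f i"
proof -
  have "(LINT t|lebesgue_on {a..b}. F t * (\<Sum>j\<in>I. f j * G j t))
      = (LINT t|lebesgue_on {a..b}. (\<Sum>j\<in>I. f j * (F t * G j t)))"
    by (simp add: sum_distrib_left algebra_simps)
  also have "\<dots> = (\<Sum>j\<in>I. f j * (LINT t|lebesgue_on {a..b}. F t * G j t))"
    using integrable_square_integrable_times_bounded[OF F G] by simp
  also have "\<dots> = (\<Sum>j\<in>I. if i = j then f j else 0)"
    using dual by (intro sum.cong) auto
  also have "\<dots> = f i" using I by simp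
  finally show ?thesis .
qed

context knot_extension
begin

lemma B_measurable: "B K j \<in> borel_measurable borel"
  by (rule borel_measurable_bspl)

lemma B_bounds: "admissible_knotvec a b p K \<Longrightarrow> 0 \<le> B K j x \<and> B K j x \<le> 2 ^ p"
  using bspl_bounds[OF mono_T] by blast

end

lemma mult_diff_locally_const:
  fixes K K' :: knotvec
  assumes fin: "finite (nodes_par K')" and le: "\<forall>z. K z \<le> K' z"
    and eq: "\<forall>z. z0 \<le> z \<and> z \<le> z1 \<longrightarrow> K z = K' z" and z: "z0 \<le> z" "z \<le> z1"
  defines "\<delta> \<equiv> int (mult_below (nodes_par K') K' z0) - int (mult_below (nodes_par K) K z0)"
  shows "int (mult_below (nodes_par K') K' z) - int (mult_below (nodes_par K) K z) = \<delta>"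
    and "int (mult_upto (nodes_par K') K' z) - int (mult_upto (nodes_par K) K z) = \<delta>"
proof -
  define D where "D P = (\<Sum>z'\<in>{z'\<in>nodes_par K'. P z'}. int (K' z') - int (K z'))" for P
  have diff: "int (\<Sum>z'\<in>{z'\<in>nodes_par K'. P z'}. K' z') - int (\<Sum>z'\<in>{z'\<in>nodes_par K. P z'}. K z')
      = D P" for P
  proof -
    have "nodes_par K \<subseteq> nodes_par K'" using le unfolding nodes_par_def by (auto intro: less_le_trans)
    then have "(\<Sum>z'\<in>{z'\<in>nodes_par K. P z'}. K z') = (\<Sum>z'\<in>{z'\<in>nodes_par K'. P z'}. K z')"
      using fin by (intro sum.mono_neutral_left) (auto simp: nodes_par_def)
    then show ?thesis unfolding D_def by (simp add: sum_subtractf)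
  qed
  have D_eq: "D P = D (\<lambda>z'. z' < z0)" if P: "\<And>z'. z' < z0 \<Longrightarrow> P z'" "\<And>z'. P z' \<Longrightarrow> z' \<le> z" for P
    unfolding D_def
  proof (intro sum.mono_neutral_right ballI)
    fix z' assume "z' \<in> {z' \<in> nodes_par K'. P z'} - {z' \<in> nodes_par K'. z' < z0}"
    then have "z0 \<le> z'" "z' \<le> z1" using P(2) z by force+
    then show "int (K' z') - int (K z') = 0" using eq by simp
  qed (use fin P in auto)
  have "\<delta> = D (\<lambda>z'. z' < z0)" unfolding \<delta>_def mult_below_def diff ..
  moreover have "D (\<lambda>z'. z' < z) = D (\<lambda>z'. z' < z0)" "D (\<lambda>z'. z' \<le> z) = D (\<lambda>z'. z' < z0)"
    using z by (auto intro!: D_eq)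
  ultimately show "int (mult_below (nodes_par K') K' z) - int (mult_below (nodes_par K) K z) = \<delta>"
    and "int (mult_upto (nodes_par K') K' z) - int (mult_upto (nodes_par K) K z) = \<delta>"
    unfolding mult_below_def mult_upto_def diff by simp_all
qed

context knot_extension
begin

lemma window_eq_iff:
  "window a p lo hi K' k = window a p lo hi K k'
     \<longleftrightarrow> (\<forall>j. k - 1 \<le> j \<longrightarrow> j \<le> k + int p \<longrightarrow> T K' j = T K (j - k + k'))"
proof -
  have "window a p lo hi K' k = window a p lo hi K k'
      \<longleftrightarrow> (\<forall>n < p + 2. T K' (k - 1 + int n) = T K (k' - 1 + int n))"
    unfolding window_def by (auto simp: list_eq_iff_nth_eq nth_upto)
  also have "\<dots> \<longleftrightarrow> (\<forall>j. k - 1 \<le> j \<longrightarrow> j \<le> k + int p \<longrightarrow> T K' j = T K (j - k + k'))"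
  proof safe
    fix j assume "\<forall>n < p + 2. T K' (k - 1 + int n) = T K (k' - 1 + int n)" "k - 1 \<le> j" "j \<le> k + int p"
    then show "T K' j = T K (j - k + k')" by (auto dest!: spec[of _ "nat (j - k + 1)"] simp: algebra_simps)
  qed (auto simp: algebra_simps)
  finally show ?thesis .
qed

text \<open>If the multiplicities of \<open>K\<close> and \<open>K'\<close> agree on the window of a \<open>K'\<close>-B-spline, then the
  number of \<open>K'\<close>-knots preceding the window exceeds that of \<open>K\<close>-knots by a constant \<open>\<delta>\<close>, so
  the window is that of the \<open>K\<close>-B-spline with index shifted by \<open>\<delta>\<close>.\<close>

lemma coarse_window_exists:
  assumes K: "admissible_knotvec a b p K" and K': "admissible_knotvec a b p K'"
    and le: "\<forall>z. K z \<le> K' z" and k: "k \<in> idx a p K'"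
    and eq: "\<forall>z. T K' (k - 1) \<le> z \<and> z \<le> T K' (k + int p) \<longrightarrow> K z = K' z"
  shows "\<exists>k'\<in>idx a p K. window a p lo hi K' k = window a p lo hi K k'"
proof -
  define \<delta> where "\<delta> = int (mult_below (nodes_par K') K' (T K' (k - 1)))
      - int (mult_below (nodes_par K) K (T K' (k - 1)))"
  have k_bounds: "1 - int p \<le> k" "k \<le> N K' - int p" using k unfolding idx_def by auto
  have shift: "- int p \<le> j - \<delta> \<and> j - \<delta> \<le> N K \<and> T K (j - \<delta>) = T K' j"
    if j: "k - 1 \<le> j" "j \<le> k + int p" for j
  proof -
    define z where "z = T K' j"
    have z: "z \<in> nodes_par K'" "int (mult_below (nodes_par K') K' z) \<le> j + int p"
      "j + int p < int (mult_upto (nodes_par K') K' z)"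
      using T_node[OF K', of j] j k_bounds unfolding z_def by simp_all
    have z_window: "T K' (k - 1) \<le> z" "z \<le> T K' (k + int p)"
      unfolding z_def using j by (auto intro: monoD[OF mono_T[OF K']])
    then have "z \<in> nodes_par K" using z(1) eq unfolding nodes_par_def by simp
    moreover have "int (mult_below (nodes_par K) K z) \<le> (j - \<delta>) + int p"
      "(j - \<delta>) + int p < int (mult_upto (nodes_par K) K z)"
      using mult_diff_locally_const[OF finite_nodes[OF K'] le eq z_window] z(2,3)
      unfolding \<delta>_def by linarith+
    ultimately show ?thesis using T_eqI[OF K] unfolding z_def by blast
  qed
  show ?thesis
  proof (intro bexI)
    show "k - \<delta> \<in> idx a p K" using shift[of "k - 1"] shift[of "k + int p"] unfolding idx_def by simp
    show "window a p lo hi K' k = window a p lo hi K (k - \<delta>)"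
      unfolding window_eq_iff using shift by (simp add: algebra_simps)
  qed
qed

context
  fixes K K' k k'
  assumes K: "admissible_knotvec a b p K" and K': "admissible_knotvec a b p K'"
    and k: "k \<in> idx a p K'" and k': "k' \<in> idx a p K"
    and window: "window a p lo hi K' k = window a p lo hi K k'"
begin

lemma window_first_iff: "k' = 1 - int p \<longleftrightarrow> k = 1 - int p"
proof -
  have "T K' (k + int p - 1) = T K (k' + int p - 1)"
    using window unfolding window_eq_iff by (auto dest: spec[of _ "k + int p - 1"] simp: algebra_simps)
  then show ?thesis using T_eq_a_iff[OF K k'] T_eq_a_iff[OF K' k] by simp
qed

lemma window_last_iff: "k' = N K - int p \<longleftrightarrow> k = N K' - int p"
proof -
  have "T K' k = T K k'" using window unfolding window_eq_iff by (auto dest: spec[of _ k])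
  then show ?thesis using T_eq_b_iff[OF K k'] T_eq_b_iff[OF K' k] by simp
qed

end

end

lemma midpoint_not_node:
  assumes "(c, d) \<in> elems K"
  shows "K ((c + d) / 2) = 0"
proof -
  from assms obtain j where j: "1 \<le> j" "j < length (zs K)" "c = zs K ! (j - 1)" "d = zs K ! j"
    unfolding elems_def by auto
  have "finite (nodes_par K)"
  proof (rule ccontr)
    assume "infinite (nodes_par K)"
    then have "zs K = []" unfolding zs_def by simp
    then show False using j by simp
  qed
  then have zs: "sorted (zs K)" "distinct (zs K)" "set (zs K) = nodes_par K" unfolding zs_def by auto
  have "c < d" using j zs sorted_wrt_nth_less[of "(<)" "zs K"] by (simp add: strict_sorted_iff)
  show ?thesis
  proof (rule ccontr)
    assume "K ((c + d) / 2) \<noteq> 0"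
    then have "(c + d) / 2 \<in> set (zs K)" using zs(3) unfolding nodes_par_def by simp
    then obtain i where i: "i < length (zs K)" "zs K ! i = (c + d) / 2" by (auto simp: in_set_conv_nth)
    consider "i \<le> j - 1" | "j \<le> i" by linarith
    then show False
    proof cases
      case 1
      then have "zs K ! i \<le> c" using sorted_nth_mono[OF zs(1) 1] j by simp
      then show False using i \<open>c < d\<close> by simp
    next
      case 2
      then have "d \<le> zs K ! i" using sorted_nth_mono[OF zs(1) 2] i j by simp
      then show False using i \<open>c < d\<close> by simp
    qed
  qed
qed

lemma reach_mult_mono: "K \<in> reach a b p K0 \<Longrightarrow> K0 z \<le> K z"
proof (induction rule: reach.induct)
  case (bisect K c d)
  then show ?case using midpoint_not_node[OF bisect.hyps(2)]
    by (metis fun_upd_apply le_zero_eq zero_le_one)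
qed auto

lemma is_knotvec_admissible:
  assumes K: "is_knotvec g a b p K" and ab: "a < b"
  shows "admissible_knotvec a b p K"
proof -
  have "K z \<le> p + 1" for z
  proof (cases "z \<in> {a..b}")
    case True
    then show ?thesis using K unfolding is_knotvec_def
      by (cases "z = a \<or> z = b") (auto simp: le_SucI)
  next
    case False
    then have "z \<notin> nodes_par K" using K unfolding is_knotvec_def by auto
    then show ?thesis unfolding nodes_par_def by simp
  qed
  then show ?thesis using K ab unfolding is_knotvec_def admissible_knotvec_def by auto
qed

text \<open>The hypotheses of \<open>lemma3p1\<close> that the argument does not use are left out: \<open>1 \<le> kmax\<close>,
  the divergence of \<open>lo\<close> and \<open>hi\<close>, the periodicity of \<open>w0\<close>, the support of the dual functions
  and \<open>v \<in> L\<^sup>2(\<Gamma>)\<close> (the integrals defining \<open>\<alpha>\<close> are compared only as expressions).\<close>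

locale refinement_setting =
  fixes \<Omega> \<Gamma> :: "pt set" and cl :: bool and g :: "real \<Rightarrow> pt" and a b :: real and p :: nat
    and K0 Kb Kc :: knotvec and kmax :: real and lo hi :: "nat \<Rightarrow> real" and w0 :: "int \<Rightarrow> real"
    and Bstar :: "real list \<Rightarrow> real \<Rightarrow> real" and v :: "pt \<Rightarrow> real"
  assumes geom: "geom_setting \<Omega> \<Gamma> cl g a b"
    and K0: "is_knotvec g a b p K0" and p: "1 \<le> p"
    and lo: "lo 0 \<le> a" "\<And>k. lo (Suc k) \<le> lo k"
    and hi: "b \<le> hi 0" "\<And>k. hi k \<le> hi (Suc k)"
    and w0_pos: "\<And>i. i \<in> idx a p K0 \<Longrightarrow> 0 < w0 i"
    and dual: "\<And>K i. K \<in> Kset g a b p K0 kmax \<Longrightarrow> i \<in> idx a p K \<Longrightarrow>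
        Bstar (window a p lo hi K i) \<in> borel_measurable (lebesgue_on {a..b}) \<and>
        integrable (lebesgue_on {a..b}) (\<lambda>t. (Bstar (window a p lo hi K i) t)\<^sup>2) \<and>
        (\<forall>j\<in>idx a p K. (LINT t|lebesgue_on {a..b}. Bstar (window a p lo hi K i) t * bspl (tk a p lo hi K) j p t)
            = (if i = j then 1 else 0))"
    and Kb: "Kb \<in> Kset g a b p K0 kmax"
    and Kc: "Kc \<in> Kset g a b p K0 kmax"
    and refines: "refines g Kc Kb"
begin

lemma a_less_b: "a < b" using geom unfolding geom_setting_def by auto

sublocale knot_extension a b p lo hi
  using a_less_b lo hi by unfold_locales auto

abbreviation KS where "KS \<equiv> Kset g a b p K0 kmax"
abbreviation W where "W K \<equiv> weights a b p lo hi K0 w0 K"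
abbreviation wh where "wh \<equiv> what a b p lo hi K0 w0"
abbreviation gi where "gi \<equiv> ginv cl g a b"
abbreviation Rh where "Rh K i x \<equiv> Rhat a b p lo hi K0 w0 K i x"
abbreviation Rb where "Rb K i y \<equiv> Rbar cl g a b p lo hi K0 w0 K i y"
abbreviation \<alpha> where "\<alpha> K i \<equiv> alpha g a b p lo hi K0 w0 Bstar K v i"
abbreviation win where "win K i \<equiv> window a p lo hi K i"
abbreviation J where "J K y \<equiv> Jop cl g a b p lo hi K0 w0 Bstar K v y"

lemma Gamma_eq: "\<Gamma> = g ` {a..b}"
  and continuous_g: "continuous_on {a..b} g"
  and inj_closed: "cl \<Longrightarrow> g a = g b \<and> inj_on g {a..<b}"
  and inj_open: "\<not> cl \<Longrightarrow> inj_on g {a..b}"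
  using geom unfolding geom_setting_def pw_C1_def by auto

lemma admissible_K0: "admissible_knotvec a b p K0"
  using is_knotvec_admissible[OF K0 a_less_b] .

lemma admissible_KS: "K \<in> KS \<Longrightarrow> admissible_knotvec a b p K"
  using is_knotvec_admissible a_less_b unfolding Kset_def by blast

lemma KS_mult_ge: "K \<in> KS \<Longrightarrow> K0 z \<le> K z"
  using reach_mult_mono unfolding Kset_def by blast

lemma Kb_le_Kc: "Kb z \<le> Kc z"
  using refines unfolding refines_def nodes_par_def by (cases "0 < Kb z") auto

lemma admissible_Kb: "admissible_knotvec a b p Kb"
  and admissible_Kc: "admissible_knotvec a b p Kc"
  using admissible_KS Kb Kc by auto

lemma ends_in_idx:
  assumes "admissible_knotvec a b p K"
  shows "1 - int p \<in> idx a p K \<and> N K - int p \<in> idx a p K"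
  using N_ge[OF assms] unfolding idx_def by auto

lemma dual_coeff:
  assumes K: "K \<in> KS" and i: "i \<in> idx a p K"
  shows "(LINT t|lebesgue_on {a..b}. Bstar (win K i) t * (\<Sum>j\<in>idx a p K. f j * B K j t)) = f i"
  using dual[OF K i] B_measurable B_bounds[OF admissible_KS[OF K]] i
  by (intro dual_functional_sum[where C = "2 ^ p"]) (auto simp: idx_def)

text \<open>The weights \<open>W K\<close>, defined by \<open>THE\<close>, are well defined: knot insertion provides
  coefficients representing \<open>wh\<close>, and the dual functionals make them unique.\<close>

lemma refined_coeffs_weights:
  assumes K: "K \<in> KS"
  shows "refined_coeffs K0 K w0 (W K)"
proof -
  obtain wK where wK: "refined_coeffs K0 K w0 wK"
    using refined_coeffs_exists[OF admissible_K0 admissible_KS[OF K]] KS_mult_ge[OF K] by blast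
  define w' where "w' k = (if k \<in> idx a p K then wK k else 0)" for k
  define P where "P w \<longleftrightarrow> (\<forall>x\<in>{a..b}. wh x = (\<Sum>k\<in>idx a p K. w k * B K k x)) \<and>
     (\<forall>k. k \<notin> idx a p K \<longrightarrow> w k = 0)" for w
  have "P w'" using wK unfolding P_def refined_coeffs_def w'_def what_def by simp
  moreover have "w = w'" if "P w" for w
  proof
    fix k
    show "w k = w' k"
    proof (cases "k \<in> idx a p K")
      case True
      have "w k = (LINT t|lebesgue_on {a..b}. Bstar (win K k) t * (\<Sum>j\<in>idx a p K. w j * B K j t))"
        using dual_coeff[OF K True] by simp
      also have "\<dots> = (LINT t|lebesgue_on {a..b}. Bstar (win K k) t * (\<Sum>j\<in>idx a p K. w' j * B K j t))"
        using \<open>P w\<close> \<open>P w'\<close> unfolding P_def by (intro Bochner_Integration.integral_cong) auto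
      finally show ?thesis using dual_coeff[OF K True] by simp
    qed (use \<open>P w\<close> \<open>P w'\<close> in \<open>simp add: P_def\<close>)
  qed
  ultimately have "W K = w'" unfolding weights_def P_def by (intro the_equality) auto
  then show ?thesis
    using wK ends_in_idx[OF admissible_KS[OF K]] unfolding refined_coeffs_def w'_def by auto
qed

context
  fixes K assumes K: "K \<in> KS"
begin

lemma weights_pos: "k \<in> idx a p K \<Longrightarrow> 0 < W K k"
  using refined_coeffs_weights[OF K] w0_pos unfolding refined_coeffs_def by blast

lemma what_eq_sum: "x \<in> {a..b} \<Longrightarrow> wh x = (\<Sum>k\<in>idx a p K. W K k * B K k x)"
  using refined_coeffs_weights[OF K] unfolding refined_coeffs_def what_def by simp

lemma weights_first: "W K (1 - int p) = w0 (1 - int p)"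
  and weights_last: "W K (N K - int p) = w0 (N K0 - int p)"
  using refined_coeffs_weights[OF K] unfolding refined_coeffs_def by simp_all

lemma weights_dual: "i \<in> idx a p K \<Longrightarrow> W K i = (LINT t|lebesgue_on {a..b}. Bstar (win K i) t * wh t)"
proof -
  assume i: "i \<in> idx a p K"
  have "(LINT t|lebesgue_on {a..b}. Bstar (win K i) t * wh t)
      = (LINT t|lebesgue_on {a..b}. Bstar (win K i) t * (\<Sum>j\<in>idx a p K. W K j * B K j t))"
    by (intro Bochner_Integration.integral_cong) (auto simp: what_eq_sum)
  then show ?thesis using dual_coeff[OF K i] by simp
qed

lemma what_nonneg: "0 \<le> wh x"
  using less_imp_le[OF w0_pos] B_bounds[OF admissible_K0] unfolding what_def
  by (auto intro!: sum_nonneg mult_nonneg_nonneg)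

lemma Rhat_nonneg: "k \<in> idx a p K \<Longrightarrow> 0 \<le> Rh K k x"
  using less_imp_le[OF weights_pos] B_bounds[OF admissible_KS[OF K]] what_nonneg
  unfolding Rhat_def by (auto intro!: divide_nonneg_nonneg mult_nonneg_nonneg)

lemma Rhat_pos:
  assumes k: "k \<in> idx a p K" and x: "T K (k - 1) < x" "x < T K (k + int p)"
    and not_knot: "\<And>j. k - 1 \<le> j \<Longrightarrow> j \<le> k + int p \<Longrightarrow> x \<noteq> T K j"
  shows "0 < Rh K k x"
proof -
  have adm: "admissible_knotvec a b p K" by (rule admissible_KS[OF K])
  have B_pos: "0 < B K k x" by (rule bspl_pos[OF mono_T[OF adm] x not_knot])
  have "x \<in> {a..b}"
    using x T_in_ab[OF adm, of "k - 1"] T_in_ab[OF adm, of "k + int p"] k unfolding idx_def by auto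
  moreover have "W K k * B K k x \<le> (\<Sum>j\<in>idx a p K. W K j * B K j x)"
    using k less_imp_le[OF weights_pos] B_bounds[OF adm]
    by (intro member_le_sum) (auto intro!: mult_nonneg_nonneg simp: idx_def)
  moreover have "0 < W K k * B K k x" using weights_pos[OF k] B_pos by simp
  ultimately have "0 < wh x" using what_eq_sum by fastforce
  then show ?thesis unfolding Rhat_def using weights_pos[OF k] B_pos by simp
qed

end

lemma ginv_g: "x \<in> {a..<b} \<Longrightarrow> gi (g x) = x"
  using inj_closed inj_open unfolding ginv_def by (cases cl) (auto intro: inv_into_f_f)

end

context refinement_setting
begin

text \<open>Coefficients with respect to the functions \<open>Rh K k\<close>, \<open>k \<in> idx a p K\<close>, of the combination
  \<open>\<Sum>i\<in>Iset cl a p K. c i * Rb K i\<close>: in the closed case the index \<open>N K - p\<close> is missing from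
  \<open>Iset\<close> and its function is part of \<open>Rb K (1 - p)\<close>.\<close>

definition unrolled_coeffs :: "knotvec \<Rightarrow> (int \<Rightarrow> real) \<Rightarrow> int \<Rightarrow> real" where
  "unrolled_coeffs K c k = (if k \<in> Iset cl a p K then c k else 0)
     + (if cl \<and> k = N K - int p then c (1 - int p) else 0)"

lemma Iset_subset_idx: "Iset cl a p K \<subseteq> idx a p K"
  unfolding Iset_def idx_def ocase_def by auto

context
  fixes K assumes K: "admissible_knotvec a b p K"
begin

lemma first_in_Iset_iff: "1 - int p \<in> Iset cl a p K \<longleftrightarrow> cl"
  using N_ge[OF K] p unfolding Iset_def ocase_def by auto

lemma last_notin_Iset: "N K - int p \<notin> Iset cl a p K"
  unfolding Iset_def by auto

lemma unrolled_coeffs_first: "unrolled_coeffs K c (1 - int p) = (if cl then c (1 - int p) else 0)"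
  and unrolled_coeffs_last: "unrolled_coeffs K c (N K - int p) = (if cl then c (1 - int p) else 0)"
  using first_in_Iset_iff last_notin_Iset N_ge[OF K] p unfolding unrolled_coeffs_def by auto

lemma unrolled_coeffs_inner: "k \<in> Iset cl a p K \<Longrightarrow> unrolled_coeffs K c k = c k"
  using last_notin_Iset unfolding unrolled_coeffs_def by auto

lemma unrolled_coeffs_eq_self:
  assumes "k \<in> idx a p K" "c (N K - int p) = c (1 - int p)" "\<not> cl \<Longrightarrow> c (1 - int p) = 0"
  shows "unrolled_coeffs K c k = c k"
proof (cases "k \<in> Iset cl a p K")
  case False
  then have "k = N K - int p \<or> \<not> cl \<and> k = 1 - int p"
    using assms(1) unfolding idx_def Iset_def ocase_def by (auto split: if_splits)
  then show ?thesis using assms(2,3) unrolled_coeffs_first unrolled_coeffs_last by auto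
qed (rule unrolled_coeffs_inner)

lemma sum_Rbar_eq_sum_Rhat:
  assumes y: "y \<in> \<Gamma>"
  shows "(\<Sum>i\<in>Iset cl a p K. c i * Rb K i y) = (\<Sum>k\<in>idx a p K. unrolled_coeffs K c k * Rh K k (gi y))"
proof -
  define r where "r k = Rh K k (gi y)" for k
  define I where "I = Iset cl a p K"
  have fin: "finite I" "finite (idx a p K)" unfolding I_def Iset_def idx_def by simp_all
  have Rb_eq: "Rb K i y = r i + (if i = 1 - int p then r (N K - int p) else 0)" for i
    unfolding Rbar_def Rfun_def r_def using y Gamma_eq by simp
  have "(\<Sum>i\<in>I. c i * Rb K i y)
      = (\<Sum>i\<in>I. c i * r i) + (\<Sum>i\<in>I. if i = 1 - int p then c i * r (N K - int p) else 0)"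
    unfolding Rb_eq by (simp add: sum.distrib[symmetric] algebra_simps if_distrib cong: if_cong)
  also have "\<dots> = (\<Sum>k\<in>idx a p K. (if k \<in> I then c k * r k else 0))
      + (\<Sum>k\<in>idx a p K. (if k = N K - int p then (if cl then c (1 - int p) * r k else 0) else 0))"
    using fin first_in_Iset_iff ends_in_idx[OF K] Iset_subset_idx[of K]
    by (simp add: sum.If_cases Int_absorb1 sum.delta' I_def)
  also have "\<dots> = (\<Sum>k\<in>idx a p K. unrolled_coeffs K c k * r k)"
    unfolding unrolled_coeffs_def I_def sum.distrib[symmetric] by (intro sum.cong) (auto simp: algebra_simps)
  finally show ?thesis unfolding r_def I_def .
qed

end

definition J_coeffs :: "knotvec \<Rightarrow> int \<Rightarrow> real" where
  "J_coeffs K = unrolled_coeffs K (\<alpha> K)"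

lemma J_eq_sum_Rhat:
  "admissible_knotvec a b p K \<Longrightarrow> y \<in> \<Gamma> \<Longrightarrow> J K y = (\<Sum>k\<in>idx a p K. J_coeffs K k * Rh K k (gi y))"
  unfolding Jop_def J_coeffs_def by (rule sum_Rbar_eq_sum_Rhat)

end

lemma closure_Ioo_minus_finite:
  fixes c d :: real
  assumes "c < d" "finite F"
  shows "{c..d} \<subseteq> closure ({c<..<d} - F)"
proof
  fix x assume x: "x \<in> {c..d}"
  show "x \<in> closure ({c<..<d} - F)"
    unfolding closure_approachable
  proof (intro allI impI)
    fix e :: real assume "0 < e"
    then have "max c (x - e) < min d (x + e)" using x assms(1) by auto
    then have "infinite ({max c (x - e)<..<min d (x + e)} - F)"
      using assms(2) by (simp add: Diff_infinite_finite)
    then obtain y where "y \<in> {max c (x - e)<..<min d (x + e)} - F" by (metis finite.emptyI ex_in_conv)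
    then show "\<exists>y\<in>{c<..<d} - F. dist y x < e" by (intro bexI[of _ y]) (auto simp: dist_real_def)
  qed
qed

lemma image_Icc_subset_closure:
  fixes g :: "real \<Rightarrow> 'a::metric_space"
  assumes g: "continuous_on {a..b} g" and cd: "a \<le> c" "c < d" "d \<le> b" and F: "finite F"
    and A: "\<And>x. c < x \<Longrightarrow> x < d \<Longrightarrow> x \<notin> F \<Longrightarrow> g x \<in> A"
  shows "g ` {c..d} \<subseteq> closure A"
proof -
  define S where "S = {c<..<d} - F"
  have "closure S \<subseteq> {c..d}" unfolding S_def by (rule closure_minimal) auto
  then have "continuous_on (closure S) g" using cd by (intro continuous_on_subset[OF g]) auto
  moreover have "g ` S \<subseteq> closure A" using A closure_subset unfolding S_def by fastforce
  ultimately have "g ` closure S \<subseteq> closure A" by (rule image_closure_subset[OF _ closed_closure])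
  moreover have "{c..d} \<subseteq> closure S" unfolding S_def by (rule closure_Ioo_minus_finite[OF cd(2) F])
  ultimately show ?thesis by blast
qed

context refinement_setting
begin

lemma g_inj_inner:
  assumes z: "z \<in> {a<..<b}" and z': "z' \<in> {a..b}" and eq: "g z = g z'"
  shows "z = z'"
proof (cases cl)
  case True
  note inj = inj_closed[OF True]
  show ?thesis
  proof (cases "z' = b")
    case True
    then have "g z = g a" using eq inj by simp
    then have "z = a" using inj_onD[OF conjunct2[OF inj], of z a] z a_less_b by simp
    then show ?thesis using z by simp
  next
    case False
    then show ?thesis using inj_onD[OF conjunct2[OF inj] eq] z z' by simp
  qed
next
  case False
  then show ?thesis using inj_onD[OF inj_open[OF False] eq] z z' by simp
qed

lemma raised_mult_in_Ntilde:
  assumes z: "z \<in> {a..b}" and less: "Kb z < Kc z"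
  shows "g z \<in> Ntilde cl g a b Kc Kb"
proof -
  have "z \<noteq> a" "z \<noteq> b" using less admissible_Kb admissible_Kc unfolding admissible_knotvec_def by auto
  then have z_inner: "z \<in> {a<..<b}" using z by auto
  have "z \<in> nodes_par Kc" using less unfolding nodes_par_def by simp
  then have in_Kc: "g z \<in> Npts g Kc" unfolding Npts_def by simp
  show ?thesis
  proof (cases "z \<in> nodes_par Kb")
    case False
    have "g z \<notin> Npts g Kb"
    proof
      assume "g z \<in> Npts g Kb"
      then obtain z' where "z' \<in> nodes_par Kb" "g z = g z'" unfolding Npts_def by auto
      with g_inj_inner[OF z_inner] node_in_ab[OF admissible_Kb] False show False by auto
    qed
    with in_Kc show ?thesis unfolding Ntilde_def by simp
  next
    case True
    then have "g z \<in> Npts g Kb" unfolding Npts_def by simp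
    moreover have "gi (g z) = z" using ginv_g z_inner by simp
    ultimately show ?thesis using in_Kc less unfolding Ntilde_def by simp
  qed
qed

lemma mult_eq_off_Ntilde:
  assumes k: "k \<in> idx a p Kc"
    and disjoint: "g ` {T Kc (k - 1)..T Kc (k + int p)} \<inter> Ntilde cl g a b Kc Kb = {}"
  shows "\<forall>z. T Kc (k - 1) \<le> z \<and> z \<le> T Kc (k + int p) \<longrightarrow> Kb z = Kc z"
proof (intro allI impI)
  fix z assume z: "T Kc (k - 1) \<le> z \<and> z \<le> T Kc (k + int p)"
  then have "z \<in> {a..b}"
    using T_in_ab[OF admissible_Kc, of "k - 1"] T_in_ab[OF admissible_Kc, of "k + int p"] k
    unfolding idx_def by auto
  show "Kb z = Kc z"
  proof (rule ccontr)
    assume "Kb z \<noteq> Kc z"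
    then have "Kb z < Kc z" using Kb_le_Kc[of z] by simp
    with \<open>z \<in> {a..b}\<close> have "g z \<in> Ntilde cl g a b Kc Kb" by (rule raised_mult_in_Ntilde)
    moreover have "g z \<in> g ` {T Kc (k - 1)..T Kc (k + int p)}" using z by simp
    ultimately show False using disjoint by blast
  qed
qed

lemma window_image_subset_closure:
  assumes K: "K \<in> KS" and k: "k \<in> idx a p K"
    and A: "\<And>x. x \<in> {a..<b} \<Longrightarrow> 0 < Rh K k x \<Longrightarrow> g x \<in> A"
  shows "g ` {T K (k - 1)..T K (k + int p)} \<subseteq> closure A"
proof -
  have adm: "admissible_knotvec a b p K" by (rule admissible_KS[OF K])
  have bounds: "a \<le> T K (k - 1)" "T K (k - 1) < T K (k + int p)" "T K (k + int p) \<le> b"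
    using T_in_ab[OF adm, of "k - 1"] T_in_ab[OF adm, of "k + int p"] T_window_proper[OF adm, of k] k
    unfolding idx_def by auto
  show ?thesis
  proof (rule image_Icc_subset_closure[OF continuous_g bounds, where F = "T K ` {k - 1..k + int p}"])
    fix x assume x: "T K (k - 1) < x" "x < T K (k + int p)" "x \<notin> T K ` {k - 1..k + int p}"
    then have "0 < Rh K k x" by (intro Rhat_pos[OF K k]) auto
    moreover have "x \<in> {a..<b}" using x bounds by auto
    ultimately show "g x \<in> A" using A by blast
  qed simp
qed

lemma window_image_subset_support:
  assumes K: "K \<in> KS" and k: "k \<in> idx a p K" "k \<noteq> 1 - int p"
  shows "g ` {T K (k - 1)..T K (k + int p)} \<subseteq> closure {y \<in> \<Gamma>. Rb K k y \<noteq> 0}"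
proof (rule window_image_subset_closure[OF K k(1)])
  fix x assume x: "x \<in> {a..<b}" "0 < Rh K k x"
  then have "g x \<in> \<Gamma>" "Rb K k (g x) = Rh K k x"
    using Gamma_eq ginv_g[OF x(1)] k(2) unfolding Rbar_def Rfun_def by auto
  then show "g x \<in> {y \<in> \<Gamma>. Rb K k y \<noteq> 0}" using x by simp
qed

lemma window_image_subset_support_first:
  assumes K: "K \<in> KS" and k: "k = 1 - int p \<or> k = N K - int p"
  shows "g ` {T K (k - 1)..T K (k + int p)} \<subseteq> closure {y \<in> \<Gamma>. Rb K (1 - int p) y \<noteq> 0}"
proof -
  have ends: "1 - int p \<in> idx a p K" "N K - int p \<in> idx a p K"
    using ends_in_idx[OF admissible_KS[OF K]] by auto
  show ?thesis
  proof (rule window_image_subset_closure[OF K])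
    show "k \<in> idx a p K" using k ends by auto
    fix x assume x: "x \<in> {a..<b}" "0 < Rh K k x"
    then have "g x \<in> \<Gamma>" "Rb K (1 - int p) (g x) = Rh K (1 - int p) x + Rh K (N K - int p) x"
      using Gamma_eq ginv_g[OF x(1)] unfolding Rbar_def Rfun_def by auto
    moreover have "0 \<le> Rh K (1 - int p) x" "0 \<le> Rh K (N K - int p) x"
      using Rhat_nonneg[OF K] ends by auto
    ultimately show "g x \<in> {y \<in> \<Gamma>. Rb K (1 - int p) y \<noteq> 0}" using x(2) k by auto
  qed
qed

lemma coarse_window_of_disjoint:
  assumes k: "k \<in> idx a p Kc"
    and disjoint: "g ` {T Kc (k - 1)..T Kc (k + int p)} \<inter> Ntilde cl g a b Kc Kb = {}"
  obtains k' where "k' \<in> idx a p Kb" "win Kc k = win Kb k'"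
  using coarse_window_exists[OF admissible_Kb admissible_Kc _ k mult_eq_off_Ntilde[OF k disjoint]]
    Kb_le_Kc by blast

end

section \<open>Comparing the coefficients of the two operators\<close>

context refinement_setting
begin

text \<open>\<open>J Kb\<close> is the coarse spline \<open>\<Sum>j. J_coeffs Kb j * W Kb j * B Kb j\<close> divided by \<open>wh\<close>;
  expanding the numerator over the finer knots gives its coefficients with respect to
  \<open>Rh Kc\<close>.\<close>

definition coarse_J_refined :: "int \<Rightarrow> real" where
  "coarse_J_refined = (SOME e. refined_coeffs Kb Kc (\<lambda>j. J_coeffs Kb j * W Kb j) e)"

definition coarse_J_coeffs :: "int \<Rightarrow> real" where
  "coarse_J_coeffs k = coarse_J_refined k / W Kc k"

lemma refined_coeffs_coarse_J: "refined_coeffs Kb Kc (\<lambda>j. J_coeffs Kb j * W Kb j) coarse_J_refined"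
proof -
  have "\<exists>e. refined_coeffs Kb Kc (\<lambda>j. J_coeffs Kb j * W Kb j) e"
    using refined_coeffs_exists[OF admissible_Kb admissible_Kc] Kb_le_Kc by blast
  then show ?thesis unfolding coarse_J_refined_def by (rule someI_ex)
qed

lemma coarse_J_eq_sum_Rhat:
  assumes y: "y \<in> \<Gamma>"
  shows "J Kb y = (\<Sum>k\<in>idx a p Kc. coarse_J_coeffs k * Rh Kc k (gi y))"
proof -
  define x where "x = gi y"
  have "J Kb y = (\<Sum>j\<in>idx a p Kb. J_coeffs Kb j * W Kb j * B Kb j x) / wh x"
    unfolding J_eq_sum_Rhat[OF admissible_Kb y] Rhat_def x_def sum_divide_distrib
    by (simp add: algebra_simps)
  also have "\<dots> = (\<Sum>k\<in>idx a p Kc. coarse_J_refined k * B Kc k x) / wh x"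
    using refined_coeffs_coarse_J unfolding refined_coeffs_def by simp
  also have "\<dots> = (\<Sum>k\<in>idx a p Kc. coarse_J_coeffs k * Rh Kc k x)"
    unfolding Rhat_def coarse_J_coeffs_def sum_divide_distrib
    using weights_pos[OF Kc] by (intro sum.cong) (force simp: field_simps)+
  finally show ?thesis unfolding x_def .
qed

lemma coarse_J_coeffs_first: "coarse_J_coeffs (1 - int p) = J_coeffs Kb (1 - int p)"
  and coarse_J_coeffs_last: "coarse_J_coeffs (N Kc - int p) = J_coeffs Kb (N Kb - int p)"
proof -
  have "W Kc (1 - int p) = W Kb (1 - int p)" "W Kc (N Kc - int p) = W Kb (N Kb - int p)"
    using weights_first[OF Kb] weights_first[OF Kc] weights_last[OF Kb] weights_last[OF Kc] by simp_all
  moreover have "0 < W Kb (1 - int p)" "0 < W Kb (N Kb - int p)"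
    using weights_pos[OF Kb] ends_in_idx[OF admissible_Kb] by auto
  ultimately show "coarse_J_coeffs (1 - int p) = J_coeffs Kb (1 - int p)"
    "coarse_J_coeffs (N Kc - int p) = J_coeffs Kb (N Kb - int p)"
    using refined_coeffs_coarse_J unfolding refined_coeffs_def coarse_J_coeffs_def by simp_all
qed

context
  fixes i k' assumes i: "i \<in> idx a p Kc" and k': "k' \<in> idx a p Kb"
    and window: "win Kc i = win Kb k'"
begin

lemma weights_eq_of_window: "W Kc i = W Kb k'"
  using weights_dual[OF Kc i] weights_dual[OF Kb k'] window by simp

lemma coarse_J_coeffs_eq_of_window: "coarse_J_coeffs i = J_coeffs Kb k'"
proof -
  have "coarse_J_refined i
      = (LINT t|lebesgue_on {a..b}. Bstar (win Kc i) t * (\<Sum>k\<in>idx a p Kc. coarse_J_refined k * B Kc k t))"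
    using dual_coeff[OF Kc i] by simp
  also have "\<dots> = (LINT t|lebesgue_on {a..b}.
      Bstar (win Kb k') t * (\<Sum>j\<in>idx a p Kb. J_coeffs Kb j * W Kb j * B Kb j t))"
    using refined_coeffs_coarse_J window unfolding refined_coeffs_def by simp
  also have "\<dots> = J_coeffs Kb k' * W Kb k'" by (rule dual_coeff[OF Kb k'])
  finally show ?thesis
    unfolding coarse_J_coeffs_def weights_eq_of_window using weights_pos[OF Kb k'] by simp
qed

lemma alpha_eq_of_window: "i \<noteq> 1 - int p \<Longrightarrow> k' \<noteq> 1 - int p \<Longrightarrow> \<alpha> Kc i = \<alpha> Kb k'"
  using window weights_eq_of_window unfolding alpha_def Rstar_def by simp

end

lemma alpha_first_eq_of_windows:
  assumes "win Kc (1 - int p) = win Kb (1 - int p)" "win Kc (N Kc - int p) = win Kb (N Kb - int p)"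
  shows "\<alpha> Kc (1 - int p) = \<alpha> Kb (1 - int p)"
  using assms ends_in_idx[OF admissible_Kb] ends_in_idx[OF admissible_Kc]
    weights_eq_of_window[of "1 - int p" "1 - int p"] weights_eq_of_window[of "N Kc - int p" "N Kb - int p"]
  unfolding alpha_def Rstar_def by simp

definition diff_coeffs :: "int \<Rightarrow> real" where
  "diff_coeffs k = J_coeffs Kc k - coarse_J_coeffs k"

lemma diff_coeffs_ends:
  "diff_coeffs (N Kc - int p) = diff_coeffs (1 - int p)" "\<not> cl \<Longrightarrow> diff_coeffs (1 - int p) = 0"
  unfolding diff_coeffs_def coarse_J_coeffs_first coarse_J_coeffs_last J_coeffs_def
    unrolled_coeffs_first[OF admissible_Kb] unrolled_coeffs_last[OF admissible_Kb]
    unrolled_coeffs_first[OF admissible_Kc] unrolled_coeffs_last[OF admissible_Kc]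
  by simp_all

lemma diff_coeffs_first_vanishes:
  assumes cl and disjoint: "closure {x \<in> \<Gamma>. Rb Kc (1 - int p) x \<noteq> 0} \<inter> Ntilde cl g a b Kc Kb = {}"
  shows "diff_coeffs (1 - int p) = 0"
proof -
  have "win Kc k = win Kb (if k = 1 - int p then 1 - int p else N Kb - int p)"
    if k: "k = 1 - int p \<or> k = N Kc - int p" for k
  proof -
    have "k \<in> idx a p Kc" using k ends_in_idx[OF admissible_Kc] by auto
    moreover have "g ` {T Kc (k - 1)..T Kc (k + int p)} \<inter> Ntilde cl g a b Kc Kb = {}"
      using window_image_subset_support_first[OF Kc k] disjoint by blast
    ultimately obtain k' where k': "k' \<in> idx a p Kb" "win Kc k = win Kb k'"
      by (rule coarse_window_of_disjoint)
    then show ?thesis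
      using window_first_iff[OF admissible_Kb admissible_Kc \<open>k \<in> idx a p Kc\<close> k']
        window_last_iff[OF admissible_Kb admissible_Kc \<open>k \<in> idx a p Kc\<close> k'] k N_ge[OF admissible_Kc] p
      by auto
  qed
  then have "\<alpha> Kc (1 - int p) = \<alpha> Kb (1 - int p)"
    using N_ge[OF admissible_Kc] p by (intro alpha_first_eq_of_windows) auto
  then show ?thesis
    unfolding diff_coeffs_def coarse_J_coeffs_first J_coeffs_def
    using unrolled_coeffs_first[OF admissible_Kb] unrolled_coeffs_first[OF admissible_Kc] \<open>cl\<close> by simp
qed

lemma diff_coeffs_inner_vanishes:
  assumes i: "i \<in> Iset cl a p Kc" "i \<noteq> 1 - int p"
    and disjoint: "closure {x \<in> \<Gamma>. Rb Kc i x \<noteq> 0} \<inter> Ntilde cl g a b Kc Kb = {}"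
  shows "diff_coeffs i = 0"
proof -
  have i_idx: "i \<in> idx a p Kc" using i Iset_subset_idx by blast
  moreover have "g ` {T Kc (i - 1)..T Kc (i + int p)} \<inter> Ntilde cl g a b Kc Kb = {}"
    using window_image_subset_support[OF Kc i_idx i(2)] disjoint by blast
  ultimately obtain k' where k': "k' \<in> idx a p Kb" and window: "win Kc i = win Kb k'"
    by (rule coarse_window_of_disjoint)
  have "k' \<noteq> 1 - int p" "k' \<noteq> N Kb - int p"
    using window_first_iff[OF admissible_Kb admissible_Kc i_idx k' window]
      window_last_iff[OF admissible_Kb admissible_Kc i_idx k' window]
      i last_notin_Iset[OF admissible_Kc] by auto
  then have "k' \<in> Iset cl a p Kb" using k' unfolding idx_def Iset_def ocase_def by auto
  then show ?thesis
    unfolding diff_coeffs_def coarse_J_coeffs_eq_of_window[OF i_idx k' window] J_coeffs_def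
      unrolled_coeffs_inner[OF admissible_Kc i(1)] unrolled_coeffs_inner[OF admissible_Kb \<open>k' \<in> Iset cl a p Kb\<close>]
    using alpha_eq_of_window[OF i_idx k' window i(2)] \<open>k' \<noteq> 1 - int p\<close> by simp
qed

lemma diff_coeffs_vanish:
  assumes "i \<in> Iset cl a p Kc" "closure {x \<in> \<Gamma>. Rb Kc i x \<noteq> 0} \<inter> Ntilde cl g a b Kc Kb = {}"
  shows "diff_coeffs i = 0"
proof (cases "i = 1 - int p")
  case True
  then have cl using assms(1) first_in_Iset_iff[OF admissible_Kc] by simp
  then show ?thesis using diff_coeffs_first_vanishes assms(2) True by simp
qed (use diff_coeffs_inner_vanishes assms in blast)

theorem J_diff_localized:
  "\<exists>c :: int \<Rightarrow> real. \<forall>y\<in>\<Gamma>. J Kc y - J Kb y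
     = (\<Sum>i\<in>{i \<in> Iset cl a p Kc. closure {x \<in> \<Gamma>. Rb Kc i x \<noteq> 0} \<inter> Ntilde cl g a b Kc Kb \<noteq> {}}.
          c i * Rb Kc i y)"
proof (intro exI ballI)
  fix y assume y: "y \<in> \<Gamma>"
  have "(\<Sum>i\<in>{i \<in> Iset cl a p Kc. closure {x \<in> \<Gamma>. Rb Kc i x \<noteq> 0} \<inter> Ntilde cl g a b Kc Kb \<noteq> {}}.
        diff_coeffs i * Rb Kc i y) = (\<Sum>i\<in>Iset cl a p Kc. diff_coeffs i * Rb Kc i y)"
    using diff_coeffs_vanish by (intro sum.mono_neutral_left) (auto simp: Iset_def)
  also have "\<dots> = (\<Sum>k\<in>idx a p Kc. diff_coeffs k * Rh Kc k (gi y))"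
    unfolding sum_Rbar_eq_sum_Rhat[OF admissible_Kc y]
    using unrolled_coeffs_eq_self[OF admissible_Kc _ diff_coeffs_ends] by simp
  also have "\<dots> = J Kc y - J Kb y"
    unfolding J_eq_sum_Rhat[OF admissible_Kc y] coarse_J_eq_sum_Rhat[OF y] diff_coeffs_def
    by (simp add: sum_subtractf left_diff_distrib)
  finally show "J Kc y - J Kb y = (\<Sum>i\<in>{i \<in> Iset cl a p Kc.
      closure {x \<in> \<Gamma>. Rb Kc i x \<noteq> 0} \<inter> Ntilde cl g a b Kc Kb \<noteq> {}}. diff_coeffs i * Rb Kc i y)" ..
qed

end

theorem lemma3p1:
  fixes \<Omega> \<Gamma> :: "pt set" and cl :: bool and g :: "real \<Rightarrow> pt" and a b :: real and p :: nat
    and K0 Kb Kc :: knotvec and kmax :: real and lo hi :: "nat \<Rightarrow> real" and w0 :: "int \<Rightarrow> real"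
    and Bstar :: "real list \<Rightarrow> real \<Rightarrow> real" and v :: "pt \<Rightarrow> real"
  assumes geom: "geom_setting \<Omega> \<Gamma> cl g a b"
    and p: "1 \<le> p"
    and K0: "is_knotvec g a b p K0"
    and kmax: "1 \<le> kmax"
    and lo: "lo 0 \<le> a" "\<And>k. lo (Suc k) \<le> lo k" "filterlim lo at_bot sequentially"
    and hi: "b \<le> hi 0" "\<And>k. hi k \<le> hi (Suc k)" "filterlim hi at_top sequentially"
    and w0_pos: "\<And>i. i \<in> idx a p K0 \<Longrightarrow> 0 < w0 i"
    and w0_per: "w0 (1 - int p) = w0 (int (Nk a K0) - int p)"
    and dual: "\<And>K i. K \<in> Kset g a b p K0 kmax \<Longrightarrow> i \<in> idx a p K \<Longrightarrow>
        Bstar (window a p lo hi K i) \<in> borel_measurable (lebesgue_on {a..b}) \<and>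
        integrable (lebesgue_on {a..b}) (\<lambda>t. (Bstar (window a p lo hi K i) t)\<^sup>2) \<and>
        (\<forall>t. t \<notin> {tk a p lo hi K (i - 1) .. tk a p lo hi K (i + int p)} \<longrightarrow> Bstar (window a p lo hi K i) t = 0) \<and>
        (\<forall>j\<in>idx a p K. (LINT t|lebesgue_on {a..b}. Bstar (window a p lo hi K i) t * bspl (tk a p lo hi K) j p t)
            = (if i = j then 1 else 0))"
    and Kb: "Kb \<in> Kset g a b p K0 kmax"
    and Kc: "Kc \<in> Kset g a b p K0 kmax"
    and ref: "refines g Kc Kb"
    and v: "L2_Gamma g a b v"
  shows "\<exists>c :: int \<Rightarrow> real. \<forall>y\<in>\<Gamma>.
     Jop cl g a b p lo hi K0 w0 Bstar Kc v y - Jop cl g a b p lo hi K0 w0 Bstar Kb v y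
     = (\<Sum>i\<in>{i \<in> Iset cl a p Kc.
              closure {x \<in> \<Gamma>. Rbar cl g a b p lo hi K0 w0 Kc i x \<noteq> 0} \<inter> Ntilde cl g a b Kc Kb \<noteq> {}}.
          c i * Rbar cl g a b p lo hi K0 w0 Kc i y)"
proof -
  interpret refinement_setting \<Omega> \<Gamma> cl g a b p K0 Kb Kc kmax lo hi w0 Bstar v
    using geom K0 p lo(1,2) hi(1,2) w0_pos dual Kb Kc ref by unfold_locales blast+
  show ?thesis by (rule J_diff_localized)
qed

end
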